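(* Let $G$ be a finite abelian group and $M$ a (small) category. Then the category $\mathrm{Fun}(M,\mathrm{Vect}_{\hat G})$ of all functors $M\to\mathrm{Vect}_{\hat G}$, with natural transformations as morphisms, is proto-abelian. If $M$ is finite (finitely many objects and finitely many morphisms), then $\mathrm{Fun}(M,\mathrm{Vect}_{\hat G})$ is finitary.
   Context: $\hat G=G\sqcup\{0\}$ with $0$ absorbing. $\mathrm{Vect}_{\hat G}$ has as objects finite pointed sets $(V,0_V)$ with an action of the monoid $\hat G$ ($0v=0_V$, $g0_V=0_V$) such that $G$ acts freely on $V\setminus\{0_V\}$; morphisms $f:V\to W$ satisfy $f(0_V)=0_W$, $f(gv)=gf(v)$, and $f(v_1)=f(v_2)\neq0_W\Rightarrow Gv_1=Gv_2$. A category with zero object and classes $\mathfrak M,\mathfrak E$ is proto-exact if: $0\to X\in\mathfrak M$, $X\to0\in\mathfrak E$; $\mathfrak M,\mathfrak E$ contain isomorphisms and are closed under composition; a commutative square with two parallel maps in $\mathfrak M$ and the other two in $\mathfrak E$ is a pullback iff it is a pushout; any cospan $X'\hookrightarrow Y'\twoheadleftarrow Y$ (mono in $\mathfrak M$, epi in $\mathfrak E$) and any span $X'\twoheadleftarrow X\hookrightarrow Y$ can be completed to such a bi-Cartesian square. Proto-abelian: $\mathfrak M$ = all monomorphisms, $\mathfrak E$ = all epimorphisms. Finitary: all Hom-sets and all $\mathrm{Ext}$-sets (equivalence classes of admissible short exact sequences $A\hookrightarrow B\twoheadrightarrow C$, i.e. bi-Cartesian squares with $0$ in the corner, modulo isomorphisms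 of the middle term compatible with the maps) are finite. *)

theory Defs
  imports "HOL-Algebra.Group" "HOL-Library.FuncSet"
begin

record ('o,'m) catg =
  cObj  :: "'o set"
  cMor  :: "'m set"
  cDom  :: "'m \<Rightarrow> 'o"
  cCod  :: "'m \<Rightarrow> 'o"
  cComp :: "'m \<Rightarrow> 'm \<Rightarrow> 'm"   (* cComp C g f = g \<circ> f *)
  cId   :: "'o \<Rightarrow> 'm"

definition hom :: "('o,'m) catg \<Rightarrow> 'o \<Rightarrow> 'o \<Rightarrow> 'm set" where
  "hom C X Y = {f \<in> cMor C. cDom C f = X \<and> cCod C f = Y}"

definition is_category :: "('o,'m) catg \<Rightarrow> bool" where
  "is_category C \<longleftrightarrow>
     (\<forall>f\<in>cMor C. cDom C f \<in> cObj C \<and> cCod C f \<in> cObj C) \<and>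
     (\<forall>X\<in>cObj C. cId C X \<in> hom C X X) \<and>
     (\<forall>f\<in>cMor C. \<forall>g\<in>cMor C. cCod C f = cDom C g \<longrightarrow>
          cComp C g f \<in> hom C (cDom C f) (cCod C g)) \<and>
     (\<forall>f\<in>cMor C. cComp C f (cId C (cDom C f)) = f \<and> cComp C (cId C (cCod C f)) f = f) \<and>
     (\<forall>f\<in>cMor C. \<forall>g\<in>cMor C. \<forall>h\<in>cMor C. cCod C f = cDom C g \<and> cCod C g = cDom C h \<longrightarrow>
          cComp C h (cComp C g f) = cComp C (cComp C h g) f)"

definition mono :: "('o,'m) catg \<Rightarrow> 'm \<Rightarrow> bool" where
  "mono C f \<longleftrightarrow> f \<in> cMor C \<and>
     (\<forall>g\<in>cMor C. \<forall>h\<in>cMor C. cCod C g = cDom C f \<and> cCod C h = cDom C f \<and>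
        cDom C g = cDom C h \<and> cComp C f g = cComp C f h \<longrightarrow> g = h)"

definition epi :: "('o,'m) catg \<Rightarrow> 'm \<Rightarrow> bool" where
  "epi C f \<longleftrightarrow> f \<in> cMor C \<and>
     (\<forall>g\<in>cMor C. \<forall>h\<in>cMor C. cDom C g = cCod C f \<and> cDom C h = cCod C f \<and>
        cCod C g = cCod C h \<and> cComp C g f = cComp C h f \<longrightarrow> g = h)"

definition iso :: "('o,'m) catg \<Rightarrow> 'm \<Rightarrow> bool" where
  "iso C f \<longleftrightarrow> f \<in> cMor C \<and>
     (\<exists>g\<in>hom C (cCod C f) (cDom C f).
        cComp C g f = cId C (cDom C f) \<and> cComp C f g = cId C (cCod C f))"

definition zero_obj :: "('o,'m) catg \<Rightarrow> 'o \<Rightarrow> bool" where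
  "zero_obj C Z \<longleftrightarrow> Z \<in> cObj C \<and>
     (\<forall>X\<in>cObj C. (\<exists>!f. f \<in> hom C X Z) \<and> (\<exists>!f. f \<in> hom C Z X))"

text \<open>Squares are written
   A --i--> B
   |j       |k
   C --l--> D \<close>

definition comm_square :: "('o,'m) catg \<Rightarrow> 'm \<Rightarrow> 'm \<Rightarrow> 'm \<Rightarrow> 'm \<Rightarrow> bool" where
  "comm_square C i j k l \<longleftrightarrow> i \<in> cMor C \<and> j \<in> cMor C \<and> k \<in> cMor C \<and> l \<in> cMor C \<and>
     cDom C i = cDom C j \<and> cCod C i = cDom C k \<and> cCod C j = cDom C l \<and> cCod C k = cCod C l \<and>
     cComp C k i = cComp C l j"

definition is_pullback :: "('o,'m) catg \<Rightarrow> 'm \<Rightarrow> 'm \<Rightarrow> 'm \<Rightarrow> 'm \<Rightarrow> bool" where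
  "is_pullback C i j k l \<longleftrightarrow> comm_square C i j k l \<and>
     (\<forall>p\<in>cMor C. \<forall>q\<in>cMor C. cDom C p = cDom C q \<and> cCod C p = cDom C k \<and> cCod C q = cDom C l \<and>
        cComp C k p = cComp C l q \<longrightarrow>
        (\<exists>!u. u \<in> hom C (cDom C p) (cDom C i) \<and> cComp C i u = p \<and> cComp C j u = q))"

definition is_pushout :: "('o,'m) catg \<Rightarrow> 'm \<Rightarrow> 'm \<Rightarrow> 'm \<Rightarrow> 'm \<Rightarrow> bool" where
  "is_pushout C i j k l \<longleftrightarrow> comm_square C i j k l \<and>
     (\<forall>p\<in>cMor C. \<forall>q\<in>cMor C. cDom C p = cCod C i \<and> cDom C q = cCod C j \<and> cCod C p = cCod C q \<and>
        cComp C p i = cComp C q j \<longrightarrow>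
        (\<exists>!u. u \<in> hom C (cCod C k) (cCod C p) \<and> cComp C u k = p \<and> cComp C u l = q))"

definition bicartesian :: "('o,'m) catg \<Rightarrow> 'm \<Rightarrow> 'm \<Rightarrow> 'm \<Rightarrow> 'm \<Rightarrow> bool" where
  "bicartesian C i j k l \<longleftrightarrow> is_pullback C i j k l \<and> is_pushout C i j k l"

definition proto_exact :: "('o,'m) catg \<Rightarrow> ('m \<Rightarrow> bool) \<Rightarrow> ('m \<Rightarrow> bool) \<Rightarrow> bool" where
  "proto_exact C MM EE \<longleftrightarrow>
     is_category C \<and> (\<exists>Z. zero_obj C Z) \<and>
     (\<forall>f. MM f \<longrightarrow> mono C f) \<and> (\<forall>f. EE f \<longrightarrow> epi C f) \<and>
     (\<forall>Z X f. zero_obj C Z \<and> X \<in> cObj C \<and> f \<in> hom C Z X \<longrightarrow> MM f) \<and>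
     (\<forall>Z X f. zero_obj C Z \<and> X \<in> cObj C \<and> f \<in> hom C X Z \<longrightarrow> EE f) \<and>
     (\<forall>f. iso C f \<longrightarrow> MM f \<and> EE f) \<and>
     (\<forall>f g. MM f \<and> MM g \<and> cCod C f = cDom C g \<longrightarrow> MM (cComp C g f)) \<and>
     (\<forall>f g. EE f \<and> EE g \<and> cCod C f = cDom C g \<longrightarrow> EE (cComp C g f)) \<and>
     (\<forall>i j k l. comm_square C i j k l \<and> MM i \<and> MM l \<and> EE j \<and> EE k \<longrightarrow>
        (is_pullback C i j k l \<longleftrightarrow> is_pushout C i j k l)) \<and>
     (\<forall>k l. MM l \<and> EE k \<and> cCod C k = cCod C l \<longrightarrow>
        (\<exists>i j. MM i \<and> EE j \<and> bicartesian C i j k l)) \<and>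
     (\<forall>i j. MM i \<and> EE j \<and> cDom C i = cDom C j \<longrightarrow>
        (\<exists>k l. EE k \<and> MM l \<and> bicartesian C i j k l))"

definition proto_abelian :: "('o,'m) catg \<Rightarrow> bool" where
  "proto_abelian C \<longleftrightarrow> proto_exact C (mono C) (epi C)"

text \<open>Admissible short exact sequences A >-i-> B -p->> Cc: bi-Cartesian squares
  with a zero object in the corner.\<close>

definition ses :: "('o,'m) catg \<Rightarrow> ('m \<Rightarrow> bool) \<Rightarrow> ('m \<Rightarrow> bool) \<Rightarrow> 'o \<Rightarrow> 'o \<Rightarrow> ('m \<times> 'm) set" where
  "ses C MM EE A Cc = {(i, p). MM i \<and> EE p \<and> cDom C i = A \<and> cCod C p = Cc \<and>
      (\<exists>Z z1 z2. zero_obj C Z \<and> z1 \<in> hom C A Z \<and> z2 \<in> hom C Z Cc \<and>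
                 bicartesian C i z1 p z2)}"

definition ses_equiv :: "('o,'m) catg \<Rightarrow> 'm \<times> 'm \<Rightarrow> 'm \<times> 'm \<Rightarrow> bool" where
  "ses_equiv C s s' \<longleftrightarrow> (\<exists>\<phi>. iso C \<phi> \<and> \<phi> \<in> hom C (cCod C (fst s)) (cCod C (fst s')) \<and>
      cComp C \<phi> (fst s) = fst s' \<and> cComp C (snd s') \<phi> = snd s)"

definition Ext :: "('o,'m) catg \<Rightarrow> ('m \<Rightarrow> bool) \<Rightarrow> ('m \<Rightarrow> bool) \<Rightarrow> 'o \<Rightarrow> 'o \<Rightarrow> ('m \<times> 'm) set set" where
  "Ext C MM EE Cc A = {{s' \<in> ses C MM EE A Cc. ses_equiv C s s'} | s. s \<in> ses C MM EE A Cc}"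

definition finitary :: "('o,'m) catg \<Rightarrow> ('m \<Rightarrow> bool) \<Rightarrow> ('m \<Rightarrow> bool) \<Rightarrow> bool" where
  "finitary C MM EE \<longleftrightarrow>
     (\<forall>X\<in>cObj C. \<forall>Y\<in>cObj C. finite (hom C X Y)) \<and>
     (\<forall>A\<in>cObj C. \<forall>Cc\<in>cObj C. finite (Ext C MM EE Cc A))"

section \<open>The category Vect over \<hat>G (pointed finite sets, carried by subsets of nat)\<close>

text \<open>An object: a finite pointed set with an action of G; the absorbing element 0 of
  \<hat>G acts as the constant map to the base point, so only the G-action is recorded.\<close>

record 'g vobj =
  vcar :: "nat set"
  vpt  :: nat
  vact :: "'g \<Rightarrow> nat \<Rightarrow> nat"

definition vect_obj :: "('g,'b) monoid_scheme \<Rightarrow> 'g vobj \<Rightarrow> bool" where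
  "vect_obj G V \<longleftrightarrow>
     finite (vcar V) \<and> vpt V \<in> vcar V \<and>
     vact V \<in> extensional (carrier G) \<and>
     (\<forall>g\<in>carrier G. vact V g \<in> vcar V \<rightarrow> vcar V \<and> vact V g \<in> extensional (vcar V)) \<and>
     (\<forall>v\<in>vcar V. vact V \<one>\<^bsub>G\<^esub> v = v) \<and>
     (\<forall>g\<in>carrier G. \<forall>h\<in>carrier G. \<forall>v\<in>vcar V. vact V (g \<otimes>\<^bsub>G\<^esub> h) v = vact V g (vact V h v)) \<and>
     (\<forall>g\<in>carrier G. vact V g (vpt V) = vpt V) \<and>
     (\<forall>g\<in>carrier G. \<forall>v\<in>vcar V - {vpt V}. vact V g v = v \<longrightarrow> g = \<one>\<^bsub>G\<^esub>)"

definition vect_mor :: "('g,'b) monoid_scheme \<Rightarrow> 'g vobj \<Rightarrow> 'g vobj \<Rightarrow> (nat \<Rightarrow> nat) \<Rightarrow> bool" where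
  "vect_mor G V W f \<longleftrightarrow>
     f \<in> vcar V \<rightarrow> vcar W \<and> f \<in> extensional (vcar V) \<and>
     f (vpt V) = vpt W \<and>
     (\<forall>g\<in>carrier G. \<forall>v\<in>vcar V. f (vact V g v) = vact W g (f v)) \<and>
     (\<forall>v1\<in>vcar V. \<forall>v2\<in>vcar V. f v1 = f v2 \<and> f v1 \<noteq> vpt W \<longrightarrow>
        (\<exists>g\<in>carrier G. vact V g v1 = v2))"

type_synonym ('o,'a,'g) vfun = "('o \<Rightarrow> 'g vobj) \<times> ('a \<Rightarrow> nat \<Rightarrow> nat)"
type_synonym ('o,'a,'g) vnat = "('o,'a,'g) vfun \<times> ('o,'a,'g) vfun \<times> ('o \<Rightarrow> nat \<Rightarrow> nat)"

definition is_vfunctor :: "('g,'b) monoid_scheme \<Rightarrow> ('o,'a) catg \<Rightarrow> ('o,'a,'g) vfun \<Rightarrow> bool" where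
  "is_vfunctor G M F \<longleftrightarrow>
     fst F \<in> extensional (cObj M) \<and> snd F \<in> extensional (cMor M) \<and>
     (\<forall>x\<in>cObj M. vect_obj G (fst F x)) \<and>
     (\<forall>f\<in>cMor M. vect_mor G (fst F (cDom M f)) (fst F (cCod M f)) (snd F f)) \<and>
     (\<forall>x\<in>cObj M. snd F (cId M x) = (\<lambda>v\<in>vcar (fst F x). v)) \<and>
     (\<forall>f\<in>cMor M. \<forall>g\<in>cMor M. cCod M f = cDom M g \<longrightarrow>
        snd F (cComp M g f) = compose (vcar (fst F (cDom M f))) (snd F g) (snd F f))"

definition is_vnat :: "('g,'b) monoid_scheme \<Rightarrow> ('o,'a) catg \<Rightarrow> ('o,'a,'g) vnat \<Rightarrow> bool" where
  "is_vnat G M t \<longleftrightarrow>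
     (case t of (F, H, \<eta>) \<Rightarrow>
       is_vfunctor G M F \<and> is_vfunctor G M H \<and> \<eta> \<in> extensional (cObj M) \<and>
       (\<forall>x\<in>cObj M. vect_mor G (fst F x) (fst H x) (\<eta> x)) \<and>
       (\<forall>f\<in>cMor M. compose (vcar (fst F (cDom M f))) (\<eta> (cCod M f)) (snd F f)
                    = compose (vcar (fst F (cDom M f))) (snd H f) (\<eta> (cDom M f))))"

definition FunVect :: "('g,'b) monoid_scheme \<Rightarrow> ('o,'a) catg \<Rightarrow> (('o,'a,'g) vfun, ('o,'a,'g) vnat) catg" where
  "FunVect G M =
     \<lparr> cObj = {F. is_vfunctor G M F},
       cMor = {t. is_vnat G M t},
       cDom = (\<lambda>t. fst t),
       cCod = (\<lambda>t. fst (snd t)),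
       cComp = (\<lambda>s t. (fst t, fst (snd s),
                  \<lambda>x\<in>cObj M. compose (vcar (fst (fst t) x)) (snd (snd s) x) (snd (snd t) x))),
       cId = (\<lambda>F. (F, F, \<lambda>x\<in>cObj M. (\<lambda>v\<in>vcar (fst F x). v))) \<rparr>"

end

theory Submission
  imports Defs
begin

(*
  In Fun(M, Vect over G^) everything relevant is computed objectwise. A natural
  transformation is a monomorphism iff its components are injective, and an epimorphism iff
  they are surjective: otherwise the inclusion of the kernel subfunctor, resp. the projection
  onto the quotient by the image, would agree with a zero map after composition. For a
  commutative square k o i = l o j with i, l mono and j, k epi, being a pullback and being a
  pushout are both equivalent to the objectwise condition k^-1(im l) = im i. A cospan is
  completed by the subfunctor k^-1(im l) of the source of k, a span by the quotient of the
  target of i by the image of the kernel of j; both squares satisfy the condition, and since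
  any pullback receives a map from the first (any pushout maps to the second), the condition
  is also necessary.

  If M is finite, Hom sets are finite since a natural transformation is a finite family of
  maps between finite sets. In a short exact sequence A >-> B ->> C an element of B x either
  lies in the image of A x or is sent injectively to C x, so |B x| <= |A x| + |C x|.
  Relabelling B along bijections onto initial segments of the naturals, every Ext class has a
  representative whose middle term is one of finitely many functors.
*)

abbreviation fobj :: "('o,'a,'g) vfun \<Rightarrow> 'o \<Rightarrow> 'g vobj" where "fobj F \<equiv> fst F"
abbreviation fmor :: "('o,'a,'g) vfun \<Rightarrow> 'a \<Rightarrow> nat \<Rightarrow> nat" where "fmor F \<equiv> snd F"
abbreviation car :: "('o,'a,'g) vfun \<Rightarrow> 'o \<Rightarrow> nat set" where "car F x \<equiv> vcar (fobj F x)"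
abbreviation pt :: "('o,'a,'g) vfun \<Rightarrow> 'o \<Rightarrow> nat" where "pt F x \<equiv> vpt (fobj F x)"
abbreviation act :: "('o,'a,'g) vfun \<Rightarrow> 'o \<Rightarrow> 'g \<Rightarrow> nat \<Rightarrow> nat" where "act F x \<equiv> vact (fobj F x)"
abbreviation nsrc :: "('o,'a,'g) vnat \<Rightarrow> ('o,'a,'g) vfun" where "nsrc t \<equiv> fst t"
abbreviation ntgt :: "('o,'a,'g) vnat \<Rightarrow> ('o,'a,'g) vfun" where "ntgt t \<equiv> fst (snd t)"
abbreviation ncomp :: "('o,'a,'g) vnat \<Rightarrow> 'o \<Rightarrow> nat \<Rightarrow> nat" where "ncomp t \<equiv> snd (snd t)"

section \<open>Elementary category theory\<close>

lemma monoD: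
  "mono C f \<Longrightarrow> g \<in> cMor C \<Longrightarrow> h \<in> cMor C \<Longrightarrow> cCod C g = cDom C f \<Longrightarrow> cCod C h = cDom C f \<Longrightarrow>
   cDom C g = cDom C h \<Longrightarrow> cComp C f g = cComp C f h \<Longrightarrow> g = h"
  unfolding mono_def by blast

lemma epiD:
  "epi C f \<Longrightarrow> g \<in> cMor C \<Longrightarrow> h \<in> cMor C \<Longrightarrow> cDom C g = cCod C f \<Longrightarrow> cDom C h = cCod C f \<Longrightarrow>
   cCod C g = cCod C h \<Longrightarrow> cComp C g f = cComp C h f \<Longrightarrow> g = h"
  unfolding epi_def by blast

locale category =
  fixes C :: "('o,'m) catg"
  assumes is_category: "is_category C"
begin

lemma dom_cod_in_obj: "f \<in> cMor C \<Longrightarrow> cDom C f \<in> cObj C \<and> cCod C f \<in> cObj C"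
  using is_category unfolding is_category_def by blast

lemma id_in_mor: "X \<in> cObj C \<Longrightarrow> cId C X \<in> cMor C \<and> cDom C (cId C X) = X \<and> cCod C (cId C X) = X"
  using is_category unfolding is_category_def hom_def by blast

lemma comp_in_mor:
  "f \<in> cMor C \<Longrightarrow> g \<in> cMor C \<Longrightarrow> cCod C f = cDom C g \<Longrightarrow>
   cComp C g f \<in> cMor C \<and> cDom C (cComp C g f) = cDom C f \<and> cCod C (cComp C g f) = cCod C g"
  using is_category unfolding is_category_def hom_def by blast

lemma comp_id_left: "f \<in> cMor C \<Longrightarrow> cComp C (cId C (cCod C f)) f = f"
  using is_category unfolding is_category_def by blast

lemma comp_id_right: "f \<in> cMor C \<Longrightarrow> cComp C f (cId C (cDom C f)) = f"
  using is_category unfolding is_category_def by blast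

lemma comp_assoc:
  "f \<in> cMor C \<Longrightarrow> g \<in> cMor C \<Longrightarrow> h \<in> cMor C \<Longrightarrow> cCod C f = cDom C g \<Longrightarrow> cCod C g = cDom C h \<Longrightarrow>
   cComp C h (cComp C g f) = cComp C (cComp C h g) f"
  using is_category unfolding is_category_def by blast

lemma zero_obj_hom_mono: assumes "zero_obj C Z" "f \<in> hom C Z X" shows "mono C f"
  unfolding mono_def
proof (intro conjI ballI impI)
  show "f \<in> cMor C" using assms(2) by (simp add: hom_def)
  fix g h assume a: "g \<in> cMor C" "h \<in> cMor C" "cCod C g = cDom C f \<and> cCod C h = cDom C f \<and>
        cDom C g = cDom C h \<and> cComp C f g = cComp C f h"
  have "cDom C g \<in> cObj C" using dom_cod_in_obj a(1) by blast
  then obtain u where "\<And>v. v \<in> hom C (cDom C g) Z \<Longrightarrow> v = u" using assms(1) unfolding zero_obj_def by metis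
  moreover have "g \<in> hom C (cDom C g) Z" "h \<in> hom C (cDom C g) Z" using a assms(2) by (auto simp: hom_def)
  ultimately show "g = h" by metis
qed

lemma zero_obj_hom_epi: assumes "zero_obj C Z" "f \<in> hom C X Z" shows "epi C f"
  unfolding epi_def
proof (intro conjI ballI impI)
  show "f \<in> cMor C" using assms(2) by (simp add: hom_def)
  fix g h assume a: "g \<in> cMor C" "h \<in> cMor C" "cDom C g = cCod C f \<and> cDom C h = cCod C f \<and>
        cCod C g = cCod C h \<and> cComp C g f = cComp C h f"
  have "cCod C g \<in> cObj C" using dom_cod_in_obj a(1) by blast
  then obtain u where "\<And>v. v \<in> hom C Z (cCod C g) \<Longrightarrow> v = u" using assms(1) unfolding zero_obj_def by metis
  moreover have "g \<in> hom C Z (cCod C g)" "h \<in> hom C Z (cCod C g)" using a assms(2) by (auto simp: hom_def)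
  ultimately show "g = h" by metis
qed

lemma iso_inverse:
  assumes "iso C f"
  obtains f' where "iso C f'" "f' \<in> hom C (cCod C f) (cDom C f)"
    "cComp C f' f = cId C (cDom C f)" "cComp C f f' = cId C (cCod C f)"
proof -
  obtain f' where f': "f' \<in> hom C (cCod C f) (cDom C f)"
    "cComp C f' f = cId C (cDom C f)" "cComp C f f' = cId C (cCod C f)"
    using assms unfolding iso_def by blast
  have "iso C f'" using f' assms unfolding iso_def hom_def by auto
  with f' that show ?thesis by blast
qed

lemma iso_mono: assumes "iso C f" shows "mono C f"
  unfolding mono_def
proof (intro conjI ballI impI)
  show f: "f \<in> cMor C" using assms by (simp add: iso_def)
  obtain f' where f': "f' \<in> hom C (cCod C f) (cDom C f)" "cComp C f' f = cId C (cDom C f)"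
    using assms by (rule iso_inverse)
  have f'm: "f' \<in> cMor C" "cDom C f' = cCod C f" using f' by (auto simp: hom_def)
  fix g h assume a: "g \<in> cMor C" "h \<in> cMor C" "cCod C g = cDom C f \<and> cCod C h = cDom C f \<and>
        cDom C g = cDom C h \<and> cComp C f g = cComp C f h"
  have "g = cComp C (cComp C f' f) g" using comp_id_left[OF a(1)] f'(2) a(3) by simp
  also have "\<dots> = cComp C f' (cComp C f g)" using comp_assoc[OF a(1) f f'm(1)] a(3) f'm(2) by simp
  also have "\<dots> = cComp C f' (cComp C f h)" using a(3) by simp
  also have "\<dots> = cComp C (cComp C f' f) h" using comp_assoc[OF a(2) f f'm(1)] a(3) f'm(2) by simp
  also have "\<dots> = h" using comp_id_left[OF a(2)] f'(2) a(3) by simp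
  finally show "g = h" .
qed

lemma iso_epi: assumes "iso C f" shows "epi C f"
  unfolding epi_def
proof (intro conjI ballI impI)
  show f: "f \<in> cMor C" using assms by (simp add: iso_def)
  obtain f' where f': "f' \<in> hom C (cCod C f) (cDom C f)" "cComp C f f' = cId C (cCod C f)"
    using assms by (rule iso_inverse)
  have f'm: "f' \<in> cMor C" "cCod C f' = cDom C f" "cDom C f' = cCod C f" using f' by (auto simp: hom_def)
  fix g h assume a: "g \<in> cMor C" "h \<in> cMor C" "cDom C g = cCod C f \<and> cDom C h = cCod C f \<and>
        cCod C g = cCod C h \<and> cComp C g f = cComp C h f"
  have "g = cComp C g (cComp C f f')" using comp_id_right[OF a(1)] f'(2) a(3) by simp
  also have "\<dots> = cComp C (cComp C g f) f'" using comp_assoc[OF f'm(1) f a(1)] a(3) f'm(2) by simp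
  also have "\<dots> = cComp C (cComp C h f) f'" using a(3) by simp
  also have "\<dots> = cComp C h (cComp C f f')" using comp_assoc[OF f'm(1) f a(2)] a(3) f'm(2) by simp
  also have "\<dots> = h" using comp_id_right[OF a(2)] f'(2) a(3) by simp
  finally show "g = h" .
qed

lemma mono_cComp: assumes "mono C f" "mono C g" "cCod C f = cDom C g" shows "mono C (cComp C g f)"
  unfolding mono_def
proof (intro conjI ballI impI)
  have f: "f \<in> cMor C" and g: "g \<in> cMor C" using assms by (auto simp: mono_def)
  show "cComp C g f \<in> cMor C" using comp_in_mor[OF f g assms(3)] by blast
  fix a b assume ab: "a \<in> cMor C" "b \<in> cMor C" "cCod C a = cDom C (cComp C g f) \<and>
    cCod C b = cDom C (cComp C g f) \<and> cDom C a = cDom C b \<and> cComp C (cComp C g f) a = cComp C (cComp C g f) b"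
  have d: "cCod C a = cDom C f" "cCod C b = cDom C f" using ab(3) comp_in_mor[OF f g assms(3)] by auto
  have "cComp C g (cComp C f a) = cComp C g (cComp C f b)"
    using ab(3) comp_assoc[OF ab(1) f g d(1) assms(3)] comp_assoc[OF ab(2) f g d(2) assms(3)] by simp
  hence "cComp C f a = cComp C f b"
    using assms(2) comp_in_mor[OF ab(1) f d(1)] comp_in_mor[OF ab(2) f d(2)] ab(3) assms(3)
    unfolding mono_def by auto
  thus "a = b" using assms(1) ab d unfolding mono_def by auto
qed

lemma epi_cComp: assumes "epi C f" "epi C g" "cCod C f = cDom C g" shows "epi C (cComp C g f)"
  unfolding epi_def
proof (intro conjI ballI impI)
  have f: "f \<in> cMor C" and g: "g \<in> cMor C" using assms by (auto simp: epi_def)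
  show "cComp C g f \<in> cMor C" using comp_in_mor[OF f g assms(3)] by blast
  fix a b assume ab: "a \<in> cMor C" "b \<in> cMor C" "cDom C a = cCod C (cComp C g f) \<and>
    cDom C b = cCod C (cComp C g f) \<and> cCod C a = cCod C b \<and> cComp C a (cComp C g f) = cComp C b (cComp C g f)"
  have d: "cCod C g = cDom C a" "cCod C g = cDom C b" using ab(3) comp_in_mor[OF f g assms(3)] by auto
  have "cComp C (cComp C a g) f = cComp C (cComp C b g) f"
    using ab(3) comp_assoc[OF f g ab(1) assms(3) d(1)] comp_assoc[OF f g ab(2) assms(3) d(2)] by simp
  hence "cComp C a g = cComp C b g"
    using assms(1) comp_in_mor[OF g ab(1) d(1)] comp_in_mor[OF g ab(2) d(2)] ab(3) assms(3)
    unfolding epi_def by auto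
  thus "a = b" using assms(2) ab d unfolding epi_def by auto
qed

lemma iso_cComp: assumes "iso C f" "iso C g" "cCod C f = cDom C g" shows "iso C (cComp C g f)"
proof -
  have f: "f \<in> cMor C" and g: "g \<in> cMor C" using assms by (auto simp: iso_def)
  obtain f' where f': "f' \<in> hom C (cCod C f) (cDom C f)"
    "cComp C f' f = cId C (cDom C f)" "cComp C f f' = cId C (cCod C f)"
    using assms(1) by (rule iso_inverse)
  obtain g' where g': "g' \<in> hom C (cCod C g) (cDom C g)"
    "cComp C g' g = cId C (cDom C g)" "cComp C g g' = cId C (cCod C g)"
    using assms(2) by (rule iso_inverse)
  have f'm: "f' \<in> cMor C" "cDom C f' = cCod C f" "cCod C f' = cDom C f" using f' by (auto simp: hom_def)
  have g'm: "g' \<in> cMor C" "cDom C g' = cCod C g" "cCod C g' = cDom C g" using g' by (auto simp: hom_def)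
  have gf: "cComp C g f \<in> cMor C" "cDom C (cComp C g f) = cDom C f" "cCod C (cComp C g f) = cCod C g"
    using comp_in_mor[OF f g assms(3)] by auto
  have fg': "cComp C f' g' \<in> cMor C" "cDom C (cComp C f' g') = cCod C g" "cCod C (cComp C f' g') = cDom C f"
    using comp_in_mor[OF g'm(1) f'm(1)] g'm f'm assms(3) by auto
  have "cComp C (cComp C f' g') (cComp C g f) = cComp C f' (cComp C (cComp C g' g) f)"
    using comp_assoc[OF gf(1) g'm(1) f'm(1)] comp_assoc[OF f g g'm(1) assms(3)] gf g'm f'm assms(3) by simp
  also have "\<dots> = cId C (cDom C f)" using g'(2) assms(3) comp_id_left[OF f] f'(2) by simp
  finally have left: "cComp C (cComp C f' g') (cComp C g f) = cId C (cDom C f)" .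
  have "cComp C (cComp C g f) (cComp C f' g') = cComp C g (cComp C (cComp C f f') g')"
    using comp_assoc[OF fg'(1) f g] comp_assoc[OF g'm(1) f'm(1) f] fg' g'm f'm assms(3) by simp
  also have "\<dots> = cId C (cCod C g)" using f'(3) assms(3) g'm comp_id_left[OF g'm(1)] g'(3) by simp
  finally have right: "cComp C (cComp C g f) (cComp C f' g') = cId C (cCod C g)" .
  show ?thesis unfolding iso_def hom_def using gf fg' left right by auto
qed

lemma ses_equiv_sym:
  assumes "ses_equiv C (i, p) (i', p')" "i \<in> cMor C" "p' \<in> cMor C" "cDom C p' = cCod C i'"
  shows "ses_equiv C (i', p') (i, p)"
proof -
  obtain \<phi> where \<phi>: "iso C \<phi>" "\<phi> \<in> hom C (cCod C i) (cCod C i')" "cComp C \<phi> i = i'" "cComp C p' \<phi> = p"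
    using assms(1) unfolding ses_equiv_def by auto
  obtain \<psi> where \<psi>: "iso C \<psi>" "\<psi> \<in> hom C (cCod C \<phi>) (cDom C \<phi>)"
    "cComp C \<psi> \<phi> = cId C (cDom C \<phi>)" "cComp C \<phi> \<psi> = cId C (cCod C \<phi>)"
    using \<phi>(1) by (rule iso_inverse)
  have \<phi>m: "\<phi> \<in> cMor C" "cDom C \<phi> = cCod C i" "cCod C \<phi> = cCod C i'" using \<phi>(2) by (auto simp: hom_def)
  have \<psi>m: "\<psi> \<in> cMor C" using \<psi>(2) by (simp add: hom_def)
  have "cComp C \<psi> i' = i"
    using comp_assoc[OF assms(2) \<phi>m(1) \<psi>m] \<phi> \<psi> \<phi>m comp_id_left[OF assms(2)] \<psi>(2) by (simp add: hom_def)
  moreover have "cComp C p \<psi> = p'"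
    using comp_assoc[OF \<psi>m \<phi>m(1) assms(3)] \<phi> \<psi> \<phi>m assms(4) comp_id_right[OF assms(3)]
    by (simp add: hom_def)
  ultimately show ?thesis unfolding ses_equiv_def using \<psi> \<phi>m by auto
qed

lemma ses_equiv_trans:
  assumes "ses_equiv C (i, p) (i', p')" "ses_equiv C (i', p') (i'', p'')"
    "i \<in> cMor C" "p'' \<in> cMor C" "cDom C p'' = cCod C i''"
  shows "ses_equiv C (i, p) (i'', p'')"
proof -
  obtain \<phi> where \<phi>: "iso C \<phi>" "\<phi> \<in> hom C (cCod C i) (cCod C i')" "cComp C \<phi> i = i'" "cComp C p' \<phi> = p"
    using assms(1) unfolding ses_equiv_def by auto
  obtain \<chi> where \<chi>: "iso C \<chi>" "\<chi> \<in> hom C (cCod C i') (cCod C i'')" "cComp C \<chi> i' = i''" "cComp C p'' \<chi> = p'"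
    using assms(2) unfolding ses_equiv_def by auto
  have \<phi>m: "\<phi> \<in> cMor C" "cDom C \<phi> = cCod C i" "cCod C \<phi> = cCod C i'" using \<phi>(2) by (auto simp: hom_def)
  have \<chi>m: "\<chi> \<in> cMor C" "cDom C \<chi> = cCod C i'" "cCod C \<chi> = cCod C i''" using \<chi>(2) by (auto simp: hom_def)
  have "cComp C (cComp C \<chi> \<phi>) i = i''"
    using comp_assoc[OF assms(3) \<phi>m(1) \<chi>m(1)] \<phi> \<chi> \<phi>m \<chi>m by simp
  moreover have "cComp C p'' (cComp C \<chi> \<phi>) = p"
    using comp_assoc[OF \<phi>m(1) \<chi>m(1) assms(4)] \<phi> \<chi> \<phi>m \<chi>m assms(5) by simp
  moreover have "iso C (cComp C \<chi> \<phi>)" using iso_cComp[OF \<phi>(1) \<chi>(1)] \<phi>m \<chi>m by simp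
  ultimately show ?thesis
    unfolding ses_equiv_def hom_def using comp_in_mor[OF \<phi>m(1) \<chi>m(1)] \<phi>m \<chi>m by auto
qed

lemma ses_equiv_conj_iso:
  assumes "i \<in> cMor C" "p \<in> cMor C" "cCod C i = cDom C p" "iso C \<phi>" "cDom C \<phi> = cCod C i"
    "cComp C \<psi> \<phi> = cId C (cCod C i)" "\<psi> \<in> hom C (cCod C \<phi>) (cCod C i)"
  shows "ses_equiv C (i, p) (cComp C \<phi> i, cComp C p \<psi>)"
proof -
  have \<phi>m: "\<phi> \<in> cMor C" using assms(4) by (simp add: iso_def)
  have \<psi>m: "\<psi> \<in> cMor C" "cDom C \<psi> = cCod C \<phi>" "cCod C \<psi> = cCod C i" using assms(7) by (auto simp: hom_def)
  have "cComp C (cComp C p \<psi>) \<phi> = p"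
    using comp_assoc[OF \<phi>m \<psi>m(1) assms(2)] \<psi>m assms(3,6) comp_id_right[OF assms(2)] by simp
  thus ?thesis
    unfolding ses_equiv_def hom_def using assms(4,5) \<phi>m comp_in_mor[OF assms(1) \<phi>m] by auto
qed

end

section \<open>Finite pointed free \<open>G\<close>-sets\<close>

context group
begin

lemma vect_obj_finite: "vect_obj G V \<Longrightarrow> finite (vcar V)"
  unfolding vect_obj_def by blast

lemma vect_obj_pt_in: "vect_obj G V \<Longrightarrow> vpt V \<in> vcar V"
  unfolding vect_obj_def by blast

lemma vect_obj_act_closed: "vect_obj G V \<Longrightarrow> g \<in> carrier G \<Longrightarrow> v \<in> vcar V \<Longrightarrow> vact V g v \<in> vcar V"
  unfolding vect_obj_def by blast

lemma vect_obj_act_one: "vect_obj G V \<Longrightarrow> v \<in> vcar V \<Longrightarrow> vact V \<one> v = v"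
  unfolding vect_obj_def by blast

lemma vect_obj_act_mult:
  "vect_obj G V \<Longrightarrow> g \<in> carrier G \<Longrightarrow> h \<in> carrier G \<Longrightarrow> v \<in> vcar V \<Longrightarrow>
   vact V (g \<otimes> h) v = vact V g (vact V h v)"
  unfolding vect_obj_def by blast

lemma vect_obj_act_pt: "vect_obj G V \<Longrightarrow> g \<in> carrier G \<Longrightarrow> vact V g (vpt V) = vpt V"
  unfolding vect_obj_def by blast

lemma vect_obj_free:
  "vect_obj G V \<Longrightarrow> g \<in> carrier G \<Longrightarrow> v \<in> vcar V \<Longrightarrow> v \<noteq> vpt V \<Longrightarrow> vact V g v = v \<Longrightarrow> g = \<one>"
  unfolding vect_obj_def by blast

lemma vect_obj_act_inv:
  assumes "vect_obj G V" "g \<in> carrier G" "v \<in> vcar V"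
  shows "vact V (inv g) (vact V g v) = v"
  using vect_obj_act_mult[OF assms(1) inv_closed[OF assms(2)] assms(2,3)] assms
  by (simp add: vect_obj_act_one)

lemma vect_mor_in: "vect_mor G V W f \<Longrightarrow> v \<in> vcar V \<Longrightarrow> f v \<in> vcar W"
  unfolding vect_mor_def by blast

lemma vect_mor_ext: "vect_mor G V W f \<Longrightarrow> f \<in> extensional (vcar V)"
  unfolding vect_mor_def by blast

lemma vect_mor_pt: "vect_mor G V W f \<Longrightarrow> f (vpt V) = vpt W"
  unfolding vect_mor_def by blast

lemma vect_mor_act:
  "vect_mor G V W f \<Longrightarrow> g \<in> carrier G \<Longrightarrow> v \<in> vcar V \<Longrightarrow> f (vact V g v) = vact W g (f v)"
  unfolding vect_mor_def by blast

text \<open>Freeness of the action upgrades the orbit condition on morphisms to injectivity off the base point.\<close>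

lemma vect_mor_inj:
  assumes "vect_obj G V" "vect_obj G W" "vect_mor G V W f" "v1 \<in> vcar V" "v2 \<in> vcar V"
    "f v1 = f v2" "f v1 \<noteq> vpt W"
  shows "v1 = v2"
proof -
  obtain g where g: "g \<in> carrier G" "vact V g v1 = v2" using assms unfolding vect_mor_def by blast
  have "vact W g (f v1) = f v1" using vect_mor_act[OF assms(3) g(1) assms(4)] g assms(6) by simp
  hence "g = \<one>" using vect_obj_free[OF assms(2) g(1) vect_mor_in[OF assms(3) assms(4)] assms(7)] by simp
  thus ?thesis using g vect_obj_act_one[OF assms(1) assms(4)] by simp
qed

lemma vect_morI:
  assumes "vect_obj G V" "\<And>v. v \<in> vcar V \<Longrightarrow> f v \<in> vcar W" "f \<in> extensional (vcar V)"
    "f (vpt V) = vpt W" "\<And>g v. g \<in> carrier G \<Longrightarrow> v \<in> vcar V \<Longrightarrow> f (vact V g v) = vact W g (f v)"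
    "\<And>v1 v2. v1 \<in> vcar V \<Longrightarrow> v2 \<in> vcar V \<Longrightarrow> f v1 = f v2 \<Longrightarrow> f v1 \<noteq> vpt W \<Longrightarrow> v1 = v2"
  shows "vect_mor G V W f"
  unfolding vect_mor_def
proof (intro conjI ballI impI)
  fix v1 v2 assume "v1 \<in> vcar V" "v2 \<in> vcar V" "f v1 = f v2 \<and> f v1 \<noteq> vpt W"
  thus "\<exists>g\<in>carrier G. vact V g v1 = v2" using assms(6) vect_obj_act_one[OF assms(1)] by blast
qed (use assms in auto)

lemma vect_mor_compose:
  assumes "vect_obj G U" "vect_obj G V" "vect_obj G W" "vect_mor G U V f" "vect_mor G V W h"
  shows "vect_mor G U W (compose (vcar U) h f)"
proof (rule vect_morI[OF assms(1)])
  fix v1 v2 assume a: "v1 \<in> vcar U" "v2 \<in> vcar U" "compose (vcar U) h f v1 = compose (vcar U) h f v2"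
    "compose (vcar U) h f v1 \<noteq> vpt W"
  hence "h (f v1) = h (f v2)" "h (f v1) \<noteq> vpt W" by (auto simp: compose_def)
  moreover from this have "f v1 \<noteq> vpt V" using vect_mor_pt[OF assms(5)] by auto
  ultimately show "v1 = v2"
    using vect_mor_inj[OF assms(2,3,5)] vect_mor_inj[OF assms(1,2,4) a(1,2)] vect_mor_in[OF assms(4)] a
    by metis
qed (use assms vect_mor_in vect_mor_act vect_mor_pt vect_obj_pt_in vect_obj_act_closed
     in \<open>auto simp: compose_def\<close>)

lemma vect_mor_id: "vect_obj G V \<Longrightarrow> vect_mor G V V (\<lambda>v\<in>vcar V. v)"
  by (rule vect_morI) (auto simp: vect_obj_pt_in vect_obj_act_closed)

definition restrict_vobj :: "'a vobj \<Rightarrow> nat set \<Rightarrow> 'a vobj" where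
  "restrict_vobj V S = \<lparr>vcar = S, vpt = vpt V, vact = \<lambda>g\<in>carrier G. restrict (vact V g) S\<rparr>"

lemma restrict_vobj_simps [simp]:
  "vcar (restrict_vobj V S) = S"
  "vpt (restrict_vobj V S) = vpt V"
  "g \<in> carrier G \<Longrightarrow> v \<in> S \<Longrightarrow> vact (restrict_vobj V S) g v = vact V g v"
  by (auto simp: restrict_vobj_def)

lemma vect_obj_restrict:
  assumes V: "vect_obj G V" and S: "S \<subseteq> vcar V" "vpt V \<in> S"
    and closed: "\<And>g v. g \<in> carrier G \<Longrightarrow> v \<in> S \<Longrightarrow> vact V g v \<in> S"
  shows "vect_obj G (restrict_vobj V S)"
  unfolding vect_obj_def
proof (intro conjI ballI impI)
  show "finite (vcar (restrict_vobj V S))" using vect_obj_finite[OF V] S(1) finite_subset by auto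
  show "vact (restrict_vobj V S) \<in> extensional (carrier G)" by (simp add: restrict_vobj_def)
next
  fix g assume g: "g \<in> carrier G"
  show "vact (restrict_vobj V S) g \<in> vcar (restrict_vobj V S) \<rightarrow> vcar (restrict_vobj V S)"
    using g closed by auto
  show "vact (restrict_vobj V S) g \<in> extensional (vcar (restrict_vobj V S))"
    using g by (simp add: restrict_vobj_def)
  show "vact (restrict_vobj V S) g (vpt (restrict_vobj V S)) = vpt (restrict_vobj V S)"
    using g S vect_obj_act_pt[OF V] by simp
  fix h v assume "h \<in> carrier G" "v \<in> vcar (restrict_vobj V S)"
  thus "vact (restrict_vobj V S) (g \<otimes>\<^bsub>G\<^esub> h) v = vact (restrict_vobj V S) g (vact (restrict_vobj V S) h v)"
    using g closed vect_obj_act_mult[OF V] S(1) by auto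
next
  fix g v assume "g \<in> carrier G" "v \<in> vcar (restrict_vobj V S) - {vpt (restrict_vobj V S)}"
    "vact (restrict_vobj V S) g v = v"
  thus "g = \<one>\<^bsub>G\<^esub>" using vect_obj_free[OF V] S(1) by auto
qed (use S V vect_obj_act_one in auto)

end

section \<open>The functor category\<close>

locale fun_vect = group G + M: category M
  for G :: "('g,'b) monoid_scheme" and M :: "('o,'a) catg"
begin

abbreviation FV where "FV \<equiv> FunVect G M"
abbreviation Ob where "Ob \<equiv> cObj M"
abbreviation Mo where "Mo \<equiv> cMor M"
abbreviation mdom where "mdom \<equiv> cDom M"
abbreviation mcod where "mcod \<equiv> cCod M"

lemma FV_simps [simp]:
  "cObj FV = {F. is_vfunctor G M F}"
  "cMor FV = {t. is_vnat G M t}"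
  "cDom FV t = nsrc t"
  "cCod FV t = ntgt t"
  by (simp_all add: FunVect_def)

lemma FV_cComp:
  "cComp FV s t = (nsrc t, ntgt s, \<lambda>x\<in>Ob. compose (car (nsrc t) x) (ncomp s x) (ncomp t x))"
  by (simp add: FunVect_def)

lemma FV_cId: "cId FV F = (F, F, \<lambda>x\<in>Ob. (\<lambda>v\<in>car F x. v))"
  by (simp add: FunVect_def)

lemma is_vfunctorI:
  assumes "fobj F \<in> extensional Ob" "fmor F \<in> extensional Mo"
    "\<And>x. x \<in> Ob \<Longrightarrow> vect_obj G (fobj F x)"
    "\<And>m. m \<in> Mo \<Longrightarrow> vect_mor G (fobj F (mdom m)) (fobj F (mcod m)) (fmor F m)"
    "\<And>x. x \<in> Ob \<Longrightarrow> fmor F (cId M x) = (\<lambda>v\<in>car F x. v)"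
    "\<And>f g v. f \<in> Mo \<Longrightarrow> g \<in> Mo \<Longrightarrow> mcod f = mdom g \<Longrightarrow> v \<in> car F (mdom f) \<Longrightarrow>
        fmor F (cComp M g f) v = fmor F g (fmor F f v)"
  shows "is_vfunctor G M F"
  unfolding is_vfunctor_def
proof (intro conjI ballI impI)
  fix f g assume a: "f \<in> Mo" "g \<in> Mo" "mcod f = mdom g"
  have c: "cComp M g f \<in> Mo" "mdom (cComp M g f) = mdom f" using M.comp_in_mor[OF a] by auto
  show "fmor F (cComp M g f) = compose (car F (mdom f)) (fmor F g) (fmor F f)"
  proof (rule extensionalityI[of _ "car F (mdom f)"])
    show "fmor F (cComp M g f) \<in> extensional (car F (mdom f))"
      using assms(4)[OF c(1)] c(2) vect_mor_ext by metis
  qed (use assms(6)[OF a] in \<open>auto simp: compose_def\<close>)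
qed (use assms in auto)

lemma vfunctor_obj_ext: "is_vfunctor G M F \<Longrightarrow> fobj F \<in> extensional Ob"
  unfolding is_vfunctor_def by blast

lemma vfunctor_mor_ext: "is_vfunctor G M F \<Longrightarrow> fmor F \<in> extensional Mo"
  unfolding is_vfunctor_def by blast

lemma vfunctor_obj: "is_vfunctor G M F \<Longrightarrow> x \<in> Ob \<Longrightarrow> vect_obj G (fobj F x)"
  unfolding is_vfunctor_def by blast

lemma vfunctor_mor:
  "is_vfunctor G M F \<Longrightarrow> m \<in> Mo \<Longrightarrow> vect_mor G (fobj F (mdom m)) (fobj F (mcod m)) (fmor F m)"
  unfolding is_vfunctor_def by blast

lemma vfunctor_id: "is_vfunctor G M F \<Longrightarrow> x \<in> Ob \<Longrightarrow> fmor F (cId M x) = (\<lambda>v\<in>car F x. v)"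
  unfolding is_vfunctor_def by blast

lemma vfunctor_comp:
  "is_vfunctor G M F \<Longrightarrow> f \<in> Mo \<Longrightarrow> g \<in> Mo \<Longrightarrow> mcod f = mdom g \<Longrightarrow> v \<in> car F (mdom f) \<Longrightarrow>
   fmor F (cComp M g f) v = fmor F g (fmor F f v)"
  unfolding is_vfunctor_def by (simp add: compose_def)

lemma vfunctor_in: "is_vfunctor G M F \<Longrightarrow> m \<in> Mo \<Longrightarrow> v \<in> car F (mdom m) \<Longrightarrow> fmor F m v \<in> car F (mcod m)"
  using vfunctor_mor vect_mor_in by blast

lemma vfunctor_pt: "is_vfunctor G M F \<Longrightarrow> m \<in> Mo \<Longrightarrow> fmor F m (pt F (mdom m)) = pt F (mcod m)"
  using vfunctor_mor vect_mor_pt by blast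

lemma vfunctor_act:
  "is_vfunctor G M F \<Longrightarrow> m \<in> Mo \<Longrightarrow> g \<in> carrier G \<Longrightarrow> v \<in> car F (mdom m) \<Longrightarrow>
   fmor F m (act F (mdom m) g v) = act F (mcod m) g (fmor F m v)"
  using vfunctor_mor vect_mor_act by blast

lemma vfunctor_inj:
  "is_vfunctor G M F \<Longrightarrow> m \<in> Mo \<Longrightarrow> v1 \<in> car F (mdom m) \<Longrightarrow> v2 \<in> car F (mdom m) \<Longrightarrow>
   fmor F m v1 = fmor F m v2 \<Longrightarrow> fmor F m v1 \<noteq> pt F (mcod m) \<Longrightarrow> v1 = v2"
  using vfunctor_mor vect_mor_inj vfunctor_obj M.dom_cod_in_obj by metis

lemma vfunctor_pt_in: "is_vfunctor G M F \<Longrightarrow> x \<in> Ob \<Longrightarrow> pt F x \<in> car F x"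
  using vfunctor_obj vect_obj_pt_in by blast

lemma vfunctor_act_closed:
  "is_vfunctor G M F \<Longrightarrow> x \<in> Ob \<Longrightarrow> g \<in> carrier G \<Longrightarrow> v \<in> car F x \<Longrightarrow> act F x g v \<in> car F x"
  using vfunctor_obj vect_obj_act_closed by blast

lemma vfunctor_act_pt: "is_vfunctor G M F \<Longrightarrow> x \<in> Ob \<Longrightarrow> g \<in> carrier G \<Longrightarrow> act F x g (pt F x) = pt F x"
  using vfunctor_obj vect_obj_act_pt by blast

lemma is_vnat_iff:
  "is_vnat G M t \<longleftrightarrow>
   is_vfunctor G M (nsrc t) \<and> is_vfunctor G M (ntgt t) \<and> ncomp t \<in> extensional Ob \<and>
   (\<forall>x\<in>Ob. vect_mor G (fobj (nsrc t) x) (fobj (ntgt t) x) (ncomp t x)) \<and>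
   (\<forall>f\<in>Mo. compose (car (nsrc t) (mdom f)) (ncomp t (mcod f)) (fmor (nsrc t) f)
            = compose (car (nsrc t) (mdom f)) (fmor (ntgt t) f) (ncomp t (mdom f)))"
  unfolding is_vnat_def by (cases t) auto

lemma is_vnatI:
  assumes "is_vfunctor G M (nsrc t)" "is_vfunctor G M (ntgt t)" "ncomp t \<in> extensional Ob"
    "\<And>x. x \<in> Ob \<Longrightarrow> vect_mor G (fobj (nsrc t) x) (fobj (ntgt t) x) (ncomp t x)"
    "\<And>f v. f \<in> Mo \<Longrightarrow> v \<in> car (nsrc t) (mdom f) \<Longrightarrow>
       ncomp t (mcod f) (fmor (nsrc t) f v) = fmor (ntgt t) f (ncomp t (mdom f) v)"
  shows "is_vnat G M t"
  unfolding is_vnat_iff using assms by (auto simp: compose_def)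

lemma vnat_src: "is_vnat G M t \<Longrightarrow> is_vfunctor G M (nsrc t)"
  unfolding is_vnat_iff by blast

lemma vnat_tgt: "is_vnat G M t \<Longrightarrow> is_vfunctor G M (ntgt t)"
  unfolding is_vnat_iff by blast

lemma vnat_ext: "is_vnat G M t \<Longrightarrow> ncomp t \<in> extensional Ob"
  unfolding is_vnat_iff by blast

lemma vnat_component: "is_vnat G M t \<Longrightarrow> x \<in> Ob \<Longrightarrow> vect_mor G (fobj (nsrc t) x) (fobj (ntgt t) x) (ncomp t x)"
  unfolding is_vnat_iff by blast

lemma vnat_naturality:
  assumes "is_vnat G M t" "f \<in> Mo" "v \<in> car (nsrc t) (mdom f)"
  shows "ncomp t (mcod f) (fmor (nsrc t) f v) = fmor (ntgt t) f (ncomp t (mdom f) v)"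
proof -
  have "compose (car (nsrc t) (mdom f)) (ncomp t (mcod f)) (fmor (nsrc t) f) v
      = compose (car (nsrc t) (mdom f)) (fmor (ntgt t) f) (ncomp t (mdom f)) v"
    using assms(1,2) unfolding is_vnat_iff by metis
  thus ?thesis using assms(3) by (simp add: compose_def)
qed

lemma vnat_in: "is_vnat G M t \<Longrightarrow> x \<in> Ob \<Longrightarrow> v \<in> car (nsrc t) x \<Longrightarrow> ncomp t x v \<in> car (ntgt t) x"
  using vnat_component vect_mor_in by blast

lemma vnat_pt: "is_vnat G M t \<Longrightarrow> x \<in> Ob \<Longrightarrow> ncomp t x (pt (nsrc t) x) = pt (ntgt t) x"
  using vnat_component vect_mor_pt by blast

lemma vnat_act:
  "is_vnat G M t \<Longrightarrow> x \<in> Ob \<Longrightarrow> g \<in> carrier G \<Longrightarrow> v \<in> car (nsrc t) x \<Longrightarrow>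
   ncomp t x (act (nsrc t) x g v) = act (ntgt t) x g (ncomp t x v)"
  using vnat_component vect_mor_act by blast

lemma vnat_inj:
  "is_vnat G M t \<Longrightarrow> x \<in> Ob \<Longrightarrow> v1 \<in> car (nsrc t) x \<Longrightarrow> v2 \<in> car (nsrc t) x \<Longrightarrow>
   ncomp t x v1 = ncomp t x v2 \<Longrightarrow> ncomp t x v1 \<noteq> pt (ntgt t) x \<Longrightarrow> v1 = v2"
  by (rule vect_mor_inj[OF vfunctor_obj[OF vnat_src _] vfunctor_obj[OF vnat_tgt _] vnat_component])

lemma vnat_component_ext: "is_vnat G M t \<Longrightarrow> x \<in> Ob \<Longrightarrow> ncomp t x \<in> extensional (car (nsrc t) x)"
  using vnat_component vect_mor_ext by blast

lemma vnat_eqI: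
  assumes "is_vnat G M s" "is_vnat G M t" "nsrc s = nsrc t" "ntgt s = ntgt t"
    "\<And>x v. x \<in> Ob \<Longrightarrow> v \<in> car (nsrc s) x \<Longrightarrow> ncomp s x v = ncomp t x v"
  shows "s = t"
proof -
  have "ncomp s = ncomp t"
  proof (rule extensionalityI[of _ Ob])
    show "ncomp s \<in> extensional Ob" "ncomp t \<in> extensional Ob" using assms vnat_ext by auto
    fix x assume x: "x \<in> Ob"
    show "ncomp s x = ncomp t x"
      by (rule extensionalityI[of _ "car (nsrc s) x"])
        (use assms x vnat_component_ext[OF assms(1) x] vnat_component_ext[OF assms(2) x] in auto)
  qed
  thus ?thesis using assms(3,4) by (metis prod.expand)
qed

lemma ncomp_cComp [simp]:
  "x \<in> Ob \<Longrightarrow> v \<in> car (nsrc t) x \<Longrightarrow> ncomp (cComp FV s t) x v = ncomp s x (ncomp t x v)"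
  by (simp add: compose_def FV_cComp)

lemma nsrc_cComp [simp]: "nsrc (cComp FV s t) = nsrc t"
  by (simp add: FV_cComp)

lemma ntgt_cComp [simp]: "ntgt (cComp FV s t) = ntgt s"
  by (simp add: FV_cComp)

lemma ncomp_cId [simp]: "x \<in> Ob \<Longrightarrow> v \<in> car F x \<Longrightarrow> ncomp (cId FV F) x v = v"
  by (simp add: FV_cId)

lemma nsrc_cId [simp]: "nsrc (cId FV F) = F"
  by (simp add: FV_cId)

lemma ntgt_cId [simp]: "ntgt (cId FV F) = F"
  by (simp add: FV_cId)

lemma vnat_cComp:
  assumes s: "is_vnat G M s" and t: "is_vnat G M t" and st: "ntgt t = nsrc s"
  shows "is_vnat G M (cComp FV s t)"
proof (rule is_vnatI)
  show "is_vfunctor G M (nsrc (cComp FV s t))" "is_vfunctor G M (ntgt (cComp FV s t))"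
    using s t vnat_src vnat_tgt by simp_all
  show "ncomp (cComp FV s t) \<in> extensional Ob" by (simp add: FV_cComp)
next
  fix x assume x: "x \<in> Ob"
  show "vect_mor G (fobj (nsrc (cComp FV s t)) x) (fobj (ntgt (cComp FV s t)) x) (ncomp (cComp FV s t) x)"
    using vect_mor_compose[OF vfunctor_obj[OF vnat_src[OF t] x] vfunctor_obj[OF vnat_src[OF s] x]
      vfunctor_obj[OF vnat_tgt[OF s] x]] vnat_component[OF t x] vnat_component[OF s x] st x
    by (simp add: FV_cComp)
next
  fix f v assume f: "f \<in> Mo" and v: "v \<in> car (nsrc (cComp FV s t)) (mdom f)"
  have dc: "mdom f \<in> Ob" "mcod f \<in> Ob" using M.dom_cod_in_obj[OF f] by auto
  have v': "v \<in> car (nsrc t) (mdom f)" using v by simp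
  have w: "ncomp t (mdom f) v \<in> car (nsrc s) (mdom f)" using vnat_in[OF t dc(1) v'] st by simp
  have "ncomp s (mcod f) (ncomp t (mcod f) (fmor (nsrc t) f v))
      = ncomp s (mcod f) (fmor (nsrc s) f (ncomp t (mdom f) v))"
    using vnat_naturality[OF t f v'] st by simp
  also have "\<dots> = fmor (ntgt s) f (ncomp s (mdom f) (ncomp t (mdom f) v))"
    using vnat_naturality[OF s f w] .
  finally show "ncomp (cComp FV s t) (mcod f) (fmor (nsrc (cComp FV s t)) f v)
      = fmor (ntgt (cComp FV s t)) f (ncomp (cComp FV s t) (mdom f) v)"
    using dc v' vfunctor_in[OF vnat_src[OF t] f v'] by simp
qed

lemma vnat_cId: assumes F: "is_vfunctor G M F" shows "is_vnat G M (cId FV F)"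
proof (rule is_vnatI)
  fix x assume x: "x \<in> Ob"
  show "vect_mor G (fobj (nsrc (cId FV F)) x) (fobj (ntgt (cId FV F)) x) (ncomp (cId FV F) x)"
    using vect_mor_id[OF vfunctor_obj[OF F x]] x by (simp add: FV_cId)
next
  fix f v assume "f \<in> Mo" "v \<in> car (nsrc (cId FV F)) (mdom f)"
  thus "ncomp (cId FV F) (mcod f) (fmor (nsrc (cId FV F)) f v)
      = fmor (ntgt (cId FV F)) f (ncomp (cId FV F) (mdom f) v)"
    using M.dom_cod_in_obj vfunctor_in[OF F] by simp
qed (use F in \<open>simp_all add: FV_cId\<close>)

lemma is_category_FV: "is_category FV"
  unfolding is_category_def
proof (intro conjI ballI impI)
  fix f assume "f \<in> cMor FV"
  hence f: "is_vnat G M f" by simp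
  show "cDom FV f \<in> cObj FV" "cCod FV f \<in> cObj FV" using vnat_src[OF f] vnat_tgt[OF f] by simp_all
  show "cComp FV f (cId FV (cDom FV f)) = f"
    by (rule vnat_eqI) (use f vnat_cComp[OF f vnat_cId[OF vnat_src[OF f]]] in auto)
  show "cComp FV (cId FV (cCod FV f)) f = f"
    by (rule vnat_eqI) (use f vnat_cComp[OF vnat_cId[OF vnat_tgt[OF f]] f] vnat_in in auto)
next
  fix X assume "X \<in> cObj FV"
  thus "cId FV X \<in> hom FV X X" using vnat_cId by (simp add: hom_def)
next
  fix f g assume "f \<in> cMor FV" "g \<in> cMor FV" "cCod FV f = cDom FV g"
  thus "cComp FV g f \<in> hom FV (cDom FV f) (cCod FV g)" using vnat_cComp by (simp add: hom_def)
next
  fix f g h assume fgh: "f \<in> cMor FV" "g \<in> cMor FV" "h \<in> cMor FV"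
    "cCod FV f = cDom FV g \<and> cCod FV g = cDom FV h"
  hence v: "is_vnat G M f" "is_vnat G M g" "is_vnat G M h" "ntgt f = nsrc g" "ntgt g = nsrc h" by auto
  show "cComp FV h (cComp FV g f) = cComp FV (cComp FV h g) f"
  proof (rule vnat_eqI)
    fix x v assume "x \<in> Ob" "v \<in> car (nsrc (cComp FV h (cComp FV g f))) x"
    thus "ncomp (cComp FV h (cComp FV g f)) x v = ncomp (cComp FV (cComp FV h g) f) x v"
      using vnat_in[OF v(1)] v(4) by simp
  qed (use v vnat_cComp[OF v(3) vnat_cComp[OF v(2,1,4)]] vnat_cComp[OF vnat_cComp[OF v(3,2,5)] v(1)] in auto)
qed

sublocale FV: category FV
  by (rule category.intro) (rule is_category_FV)

section \<open>Subfunctors and quotients\<close>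

definition is_subfunctor :: "('o,'a,'g) vfun \<Rightarrow> ('o \<Rightarrow> nat set) \<Rightarrow> bool" where
  "is_subfunctor F S \<longleftrightarrow>
     (\<forall>x\<in>Ob. S x \<subseteq> car F x \<and> pt F x \<in> S x \<and> (\<forall>g\<in>carrier G. \<forall>v\<in>S x. act F x g v \<in> S x)) \<and>
     (\<forall>m\<in>Mo. \<forall>v\<in>S (mdom m). fmor F m v \<in> S (mcod m))"

lemma is_subfunctorI:
  assumes "\<And>x. x \<in> Ob \<Longrightarrow> S x \<subseteq> car F x" "\<And>x. x \<in> Ob \<Longrightarrow> pt F x \<in> S x"
    "\<And>x g v. x \<in> Ob \<Longrightarrow> g \<in> carrier G \<Longrightarrow> v \<in> S x \<Longrightarrow> act F x g v \<in> S x"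
    "\<And>m v. m \<in> Mo \<Longrightarrow> v \<in> S (mdom m) \<Longrightarrow> fmor F m v \<in> S (mcod m)"
  shows "is_subfunctor F S"
  using assms unfolding is_subfunctor_def by blast

lemma subfunctor_subset: "is_subfunctor F S \<Longrightarrow> x \<in> Ob \<Longrightarrow> S x \<subseteq> car F x"
  unfolding is_subfunctor_def by blast

lemma subfunctor_pt: "is_subfunctor F S \<Longrightarrow> x \<in> Ob \<Longrightarrow> pt F x \<in> S x"
  unfolding is_subfunctor_def by blast

lemma subfunctor_act: "is_subfunctor F S \<Longrightarrow> x \<in> Ob \<Longrightarrow> g \<in> carrier G \<Longrightarrow> v \<in> S x \<Longrightarrow> act F x g v \<in> S x"
  unfolding is_subfunctor_def by blast

lemma subfunctor_fmor: "is_subfunctor F S \<Longrightarrow> m \<in> Mo \<Longrightarrow> v \<in> S (mdom m) \<Longrightarrow> fmor F m v \<in> S (mcod m)"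
  unfolding is_subfunctor_def by blast

lemma subfunctor_act_iff:
  assumes F: "is_vfunctor G M F" and S: "is_subfunctor F S" and x: "x \<in> Ob" and g: "g \<in> carrier G"
    and v: "v \<in> car F x"
  shows "act F x g v \<in> S x \<longleftrightarrow> v \<in> S x"
proof
  assume "act F x g v \<in> S x"
  hence "act F x (inv\<^bsub>G\<^esub> g) (act F x g v) \<in> S x" using subfunctor_act[OF S x] g by simp
  thus "v \<in> S x" using vect_obj_act_inv[OF vfunctor_obj[OF F x] g v] by simp
qed (use subfunctor_act[OF S x g] in auto)

lemma is_subfunctor_pt:
  assumes "is_vfunctor G M F" shows "is_subfunctor F (\<lambda>x. {pt F x})"
  by (rule is_subfunctorI) (use assms vfunctor_pt_in vfunctor_act_pt vfunctor_pt in auto)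

lemma is_subfunctor_car:
  assumes "is_vfunctor G M F" shows "is_subfunctor F (car F)"
  by (rule is_subfunctorI) (use assms vfunctor_pt_in vfunctor_act_closed vfunctor_in in auto)

lemma is_subfunctor_vimage:
  assumes t: "is_vnat G M t" and S: "is_subfunctor (ntgt t) S"
  shows "is_subfunctor (nsrc t) (\<lambda>x. {v \<in> car (nsrc t) x. ncomp t x v \<in> S x})"
proof (rule is_subfunctorI)
  fix x assume x: "x \<in> Ob"
  show "pt (nsrc t) x \<in> {v \<in> car (nsrc t) x. ncomp t x v \<in> S x}"
    using vfunctor_pt_in[OF vnat_src[OF t] x] vnat_pt[OF t x] subfunctor_pt[OF S x] by simp
  fix g v assume "g \<in> carrier G" "v \<in> {v \<in> car (nsrc t) x. ncomp t x v \<in> S x}"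
  thus "act (nsrc t) x g v \<in> {v \<in> car (nsrc t) x. ncomp t x v \<in> S x}"
    using vfunctor_act_closed[OF vnat_src[OF t] x] vnat_act[OF t x] subfunctor_act[OF S x] by simp
next
  fix m v assume "m \<in> Mo" "v \<in> {v \<in> car (nsrc t) (mdom m). ncomp t (mdom m) v \<in> S (mdom m)}"
  thus "fmor (nsrc t) m v \<in> {v \<in> car (nsrc t) (mcod m). ncomp t (mcod m) v \<in> S (mcod m)}"
    using vfunctor_in[OF vnat_src[OF t]] vnat_naturality[OF t] subfunctor_fmor[OF S] by simp
qed auto

lemma is_subfunctor_image:
  assumes t: "is_vnat G M t" and S: "is_subfunctor (nsrc t) S"
  shows "is_subfunctor (ntgt t) (\<lambda>x. ncomp t x ` S x)"
proof (rule is_subfunctorI)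
  fix x assume x: "x \<in> Ob"
  show "ncomp t x ` S x \<subseteq> car (ntgt t) x" using vnat_in[OF t x] subfunctor_subset[OF S x] by auto
  show "pt (ntgt t) x \<in> ncomp t x ` S x"
    using vnat_pt[OF t x] subfunctor_pt[OF S x] by (metis imageI)
  fix g w assume g: "g \<in> carrier G" and "w \<in> ncomp t x ` S x"
  then obtain v where v: "v \<in> S x" "w = ncomp t x v" by blast
  have "act (ntgt t) x g w = ncomp t x (act (nsrc t) x g v)"
    using vnat_act[OF t x g] v subfunctor_subset[OF S x] by auto
  thus "act (ntgt t) x g w \<in> ncomp t x ` S x" using subfunctor_act[OF S x g v(1)] by simp
next
  fix m w assume m: "m \<in> Mo" and "w \<in> ncomp t (mdom m) ` S (mdom m)"
  then obtain v where v: "v \<in> S (mdom m)" "w = ncomp t (mdom m) v" by blast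
  have "v \<in> car (nsrc t) (mdom m)" using v(1) subfunctor_subset[OF S] M.dom_cod_in_obj[OF m] by blast
  hence "fmor (ntgt t) m w = ncomp t (mcod m) (fmor (nsrc t) m v)"
    using vnat_naturality[OF t m] v(2) by simp
  thus "fmor (ntgt t) m w \<in> ncomp t (mcod m) ` S (mcod m)" using subfunctor_fmor[OF S m v(1)] by simp
qed

definition subfunctor :: "('o,'a,'g) vfun \<Rightarrow> ('o \<Rightarrow> nat set) \<Rightarrow> ('o,'a,'g) vfun" where
  "subfunctor F S = (\<lambda>x\<in>Ob. restrict_vobj (fobj F x) (S x), \<lambda>m\<in>Mo. restrict (fmor F m) (S (mdom m)))"

lemma subfunctor_simps [simp]:
  "x \<in> Ob \<Longrightarrow> car (subfunctor F S) x = S x"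
  "x \<in> Ob \<Longrightarrow> pt (subfunctor F S) x = pt F x"
  "x \<in> Ob \<Longrightarrow> g \<in> carrier G \<Longrightarrow> v \<in> S x \<Longrightarrow> act (subfunctor F S) x g v = act F x g v"
  "m \<in> Mo \<Longrightarrow> v \<in> S (mdom m) \<Longrightarrow> fmor (subfunctor F S) m v = fmor F m v"
  by (auto simp: subfunctor_def)

lemma vect_obj_subfunctor:
  assumes F: "is_vfunctor G M F" and S: "is_subfunctor F S" and x: "x \<in> Ob"
  shows "vect_obj G (fobj (subfunctor F S) x)"
  using x vect_obj_restrict[OF vfunctor_obj[OF F x] subfunctor_subset[OF S x] subfunctor_pt[OF S x]]
    subfunctor_act[OF S x] by (simp add: subfunctor_def)

lemma is_vfunctor_subfunctor:
  assumes F: "is_vfunctor G M F" and S: "is_subfunctor F S"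
  shows "is_vfunctor G M (subfunctor F S)"
proof (rule is_vfunctorI)
  fix x assume x: "x \<in> Ob"
  show "vect_obj G (fobj (subfunctor F S) x)" by (rule vect_obj_subfunctor[OF F S x])
  show "fmor (subfunctor F S) (cId M x) = (\<lambda>v\<in>car (subfunctor F S) x. v)"
    using x M.id_in_mor[OF x] vfunctor_id[OF F x] subfunctor_subset[OF S x]
    by (auto simp: subfunctor_def Int_absorb1)
next
  fix m assume m: "m \<in> Mo"
  have dc: "mdom m \<in> Ob" "mcod m \<in> Ob" using M.dom_cod_in_obj[OF m] by auto
  show "vect_mor G (fobj (subfunctor F S) (mdom m)) (fobj (subfunctor F S) (mcod m)) (fmor (subfunctor F S) m)"
  proof (rule vect_morI[OF vect_obj_subfunctor[OF F S dc(1)]])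
    fix v1 v2 assume "v1 \<in> car (subfunctor F S) (mdom m)" "v2 \<in> car (subfunctor F S) (mdom m)"
      "fmor (subfunctor F S) m v1 = fmor (subfunctor F S) m v2"
      "fmor (subfunctor F S) m v1 \<noteq> vpt (fobj (subfunctor F S) (mcod m))"
    thus "v1 = v2" using dc m vfunctor_inj[OF F m] subfunctor_subset[OF S dc(1)] by (simp add: subset_iff)
  qed (use dc m subfunctor_fmor[OF S m] vfunctor_pt[OF F m] subfunctor_pt[OF S dc(1)]
         subfunctor_act[OF S dc(1)] vfunctor_act[OF F m] subfunctor_subset[OF S dc(1)]
       in \<open>auto simp: subfunctor_def\<close>)
next
  fix f g v assume a: "f \<in> Mo" "g \<in> Mo" "mcod f = mdom g" "v \<in> car (subfunctor F S) (mdom f)"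
  thus "fmor (subfunctor F S) (cComp M g f) v = fmor (subfunctor F S) g (fmor (subfunctor F S) f v)"
    using M.comp_in_mor[OF a(1-3)] M.dom_cod_in_obj[OF a(1)] subfunctor_fmor[OF S a(1)]
      vfunctor_comp[OF F a(1-3)] subfunctor_subset[OF S] by auto
qed (auto simp: subfunctor_def)

definition subfunctor_incl :: "('o,'a,'g) vfun \<Rightarrow> ('o \<Rightarrow> nat set) \<Rightarrow> ('o,'a,'g) vnat" where
  "subfunctor_incl F S = (subfunctor F S, F, \<lambda>x\<in>Ob. \<lambda>v\<in>S x. v)"

lemma subfunctor_incl_simps [simp]:
  "nsrc (subfunctor_incl F S) = subfunctor F S"
  "ntgt (subfunctor_incl F S) = F"
  "x \<in> Ob \<Longrightarrow> v \<in> S x \<Longrightarrow> ncomp (subfunctor_incl F S) x v = v"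
  by (auto simp: subfunctor_incl_def)

lemma vnat_subfunctor_incl:
  assumes F: "is_vfunctor G M F" and S: "is_subfunctor F S"
  shows "is_vnat G M (subfunctor_incl F S)"
proof (rule is_vnatI)
  fix x assume x: "x \<in> Ob"
  show "vect_mor G (fobj (nsrc (subfunctor_incl F S)) x) (fobj (ntgt (subfunctor_incl F S)) x)
      (ncomp (subfunctor_incl F S) x)"
    by (rule vect_morI) (use x vect_obj_subfunctor[OF F S x] subfunctor_subset[OF S x]
      subfunctor_pt[OF S x] subfunctor_act[OF S x] in \<open>auto simp: subfunctor_incl_def\<close>)
next
  fix f v assume "f \<in> Mo" "v \<in> car (nsrc (subfunctor_incl F S)) (mdom f)"
  thus "ncomp (subfunctor_incl F S) (mcod f) (fmor (nsrc (subfunctor_incl F S)) f v)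
      = fmor (ntgt (subfunctor_incl F S)) f (ncomp (subfunctor_incl F S) (mdom f) v)"
    using M.dom_cod_in_obj subfunctor_fmor[OF S] by simp
qed (use F is_vfunctor_subfunctor[OF F S] in \<open>simp_all add: subfunctor_incl_def\<close>)

definition zero_map :: "('o,'a,'g) vfun \<Rightarrow> ('o,'a,'g) vfun \<Rightarrow> ('o,'a,'g) vnat" where
  "zero_map F H = (F, H, \<lambda>x\<in>Ob. \<lambda>v\<in>car F x. pt H x)"

lemma zero_map_simps [simp]:
  "nsrc (zero_map F H) = F"
  "ntgt (zero_map F H) = H"
  "x \<in> Ob \<Longrightarrow> v \<in> car F x \<Longrightarrow> ncomp (zero_map F H) x v = pt H x"
  by (auto simp: zero_map_def)

lemma vnat_zero_map:
  assumes F: "is_vfunctor G M F" and H: "is_vfunctor G M H"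
  shows "is_vnat G M (zero_map F H)"
proof (rule is_vnatI)
  fix x assume x: "x \<in> Ob"
  show "vect_mor G (fobj (nsrc (zero_map F H)) x) (fobj (ntgt (zero_map F H)) x) (ncomp (zero_map F H) x)"
    by (rule vect_morI) (use x vfunctor_obj[OF F x] vfunctor_pt_in[OF F x] vfunctor_pt_in[OF H x]
      vfunctor_act_closed[OF F x] vfunctor_act_pt[OF H x] in \<open>auto simp: zero_map_def\<close>)
next
  fix f v assume "f \<in> Mo" "v \<in> car (nsrc (zero_map F H)) (mdom f)"
  thus "ncomp (zero_map F H) (mcod f) (fmor (nsrc (zero_map F H)) f v)
      = fmor (ntgt (zero_map F H)) f (ncomp (zero_map F H) (mdom f) v)"
    using M.dom_cod_in_obj vfunctor_in[OF F] vfunctor_pt[OF H] by simp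
qed (use F H in \<open>auto simp: zero_map_def\<close>)

text \<open>The quotient \<open>F/I\<close> by a subfunctor \<open>I\<close> collapses \<open>I\<close> to the base point; it is carried by
  the complement of \<open>I\<close> together with the base point.\<close>

definition collapse :: "('o,'a,'g) vfun \<Rightarrow> ('o \<Rightarrow> nat set) \<Rightarrow> 'o \<Rightarrow> nat \<Rightarrow> nat" where
  "collapse F I x v = (if v \<in> I x then pt F x else v)"

definition quot_car :: "('o,'a,'g) vfun \<Rightarrow> ('o \<Rightarrow> nat set) \<Rightarrow> 'o \<Rightarrow> nat set" where
  "quot_car F I x = car F x - I x \<union> {pt F x}"

definition quotient_functor :: "('o,'a,'g) vfun \<Rightarrow> ('o \<Rightarrow> nat set) \<Rightarrow> ('o,'a,'g) vfun" where
  "quotient_functor F I =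
     (\<lambda>x\<in>Ob. restrict_vobj (fobj F x) (quot_car F I x),
      \<lambda>m\<in>Mo. \<lambda>v\<in>quot_car F I (mdom m). collapse F I (mcod m) (fmor F m v))"

definition quotient_map :: "('o,'a,'g) vfun \<Rightarrow> ('o \<Rightarrow> nat set) \<Rightarrow> ('o,'a,'g) vnat" where
  "quotient_map F I = (F, quotient_functor F I, \<lambda>x\<in>Ob. \<lambda>v\<in>car F x. collapse F I x v)"

lemma quotient_functor_simps [simp]:
  "x \<in> Ob \<Longrightarrow> car (quotient_functor F I) x = quot_car F I x"
  "x \<in> Ob \<Longrightarrow> pt (quotient_functor F I) x = pt F x"
  "x \<in> Ob \<Longrightarrow> g \<in> carrier G \<Longrightarrow> v \<in> quot_car F I x \<Longrightarrow> act (quotient_functor F I) x g v = act F x g v"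
  "m \<in> Mo \<Longrightarrow> v \<in> quot_car F I (mdom m) \<Longrightarrow>
     fmor (quotient_functor F I) m v = collapse F I (mcod m) (fmor F m v)"
  by (auto simp: quotient_functor_def)

lemma quotient_map_simps [simp]:
  "nsrc (quotient_map F I) = F"
  "ntgt (quotient_map F I) = quotient_functor F I"
  "x \<in> Ob \<Longrightarrow> v \<in> car F x \<Longrightarrow> ncomp (quotient_map F I) x v = collapse F I x v"
  by (auto simp: quotient_map_def)

context
  fixes F I assumes F: "is_vfunctor G M F" and I: "is_subfunctor F I"
begin

lemma quot_car_subset: "x \<in> Ob \<Longrightarrow> quot_car F I x \<subseteq> car F x"
  using vfunctor_pt_in[OF F] by (auto simp: quot_car_def)

lemma collapse_in: "x \<in> Ob \<Longrightarrow> v \<in> car F x \<Longrightarrow> collapse F I x v \<in> quot_car F I x"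
  by (simp add: collapse_def quot_car_def)

lemma collapse_pt: "x \<in> Ob \<Longrightarrow> collapse F I x (pt F x) = pt F x"
  by (simp add: collapse_def)

lemma collapse_quot_car: "x \<in> Ob \<Longrightarrow> v \<in> quot_car F I x \<Longrightarrow> collapse F I x v = v"
  by (auto simp: collapse_def quot_car_def)

lemma collapse_eq_pt_iff: "x \<in> Ob \<Longrightarrow> collapse F I x v = pt F x \<longleftrightarrow> v \<in> I x \<or> v = pt F x"
  by (simp add: collapse_def)

lemma collapse_act:
  "x \<in> Ob \<Longrightarrow> g \<in> carrier G \<Longrightarrow> v \<in> car F x \<Longrightarrow>
   collapse F I x (act F x g v) = act F x g (collapse F I x v)"
  using subfunctor_act_iff[OF F I] vfunctor_act_pt[OF F] by (simp add: collapse_def)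

lemma collapse_fmor:
  "m \<in> Mo \<Longrightarrow> v \<in> car F (mdom m) \<Longrightarrow>
   collapse F I (mcod m) (fmor F m (collapse F I (mdom m) v)) = collapse F I (mcod m) (fmor F m v)"
  using subfunctor_fmor[OF I] subfunctor_pt[OF I] vfunctor_pt[OF F] M.dom_cod_in_obj
  by (simp add: collapse_def)

lemma quot_car_act_closed:
  "x \<in> Ob \<Longrightarrow> g \<in> carrier G \<Longrightarrow> v \<in> quot_car F I x \<Longrightarrow> act F x g v \<in> quot_car F I x"
  using collapse_act[of x g v] collapse_in[OF _ vfunctor_act_closed[OF F]] collapse_quot_car
    quot_car_subset by (metis subsetD)

lemma vect_obj_quotient: "x \<in> Ob \<Longrightarrow> vect_obj G (fobj (quotient_functor F I) x)"
  using vect_obj_restrict[OF vfunctor_obj[OF F] quot_car_subset] quot_car_act_closed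
  by (simp add: quotient_functor_def quot_car_def)

lemma vect_mor_quotient:
  assumes m: "m \<in> Mo"
  shows "vect_mor G (fobj (quotient_functor F I) (mdom m)) (fobj (quotient_functor F I) (mcod m))
           (fmor (quotient_functor F I) m)"
proof -
  have dc: "mdom m \<in> Ob" "mcod m \<in> Ob" using M.dom_cod_in_obj[OF m] by auto
  have car: "\<And>v. v \<in> quot_car F I (mdom m) \<Longrightarrow> v \<in> car F (mdom m)" using quot_car_subset[OF dc(1)] by blast
  show ?thesis
  proof (rule vect_morI[OF vect_obj_quotient[OF dc(1)]])
    fix g v assume "g \<in> carrier G" "v \<in> car (quotient_functor F I) (mdom m)"
    thus "fmor (quotient_functor F I) m (act (quotient_functor F I) (mdom m) g v)
        = act (quotient_functor F I) (mcod m) g (fmor (quotient_functor F I) m v)"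
      using dc m car quot_car_act_closed vfunctor_act[OF F m] collapse_act vfunctor_in[OF F m]
        collapse_in by simp
  next
    fix v1 v2 assume v: "v1 \<in> car (quotient_functor F I) (mdom m)" "v2 \<in> car (quotient_functor F I) (mdom m)"
      and eq: "fmor (quotient_functor F I) m v1 = fmor (quotient_functor F I) m v2"
      and ne: "fmor (quotient_functor F I) m v1 \<noteq> vpt (fobj (quotient_functor F I) (mcod m))"
    have "fmor F m v1 = fmor F m v2" "fmor F m v1 \<noteq> pt F (mcod m)"
      using eq ne dc m v collapse_eq_pt_iff[OF dc(2)] by (auto simp: collapse_def split: if_splits)
    thus "v1 = v2" using vfunctor_inj[OF F m] car v dc by simp
  qed (use dc m car vfunctor_in[OF F m] collapse_in vfunctor_pt[OF F m] collapse_pt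
       in \<open>auto simp: quotient_functor_def quot_car_def\<close>)
qed

lemma is_vfunctor_quotient: "is_vfunctor G M (quotient_functor F I)"
proof (rule is_vfunctorI)
  fix x assume x: "x \<in> Ob"
  show "fmor (quotient_functor F I) (cId M x) = (\<lambda>v\<in>car (quotient_functor F I) x. v)"
    using x M.id_in_mor[OF x] vfunctor_id[OF F x] quot_car_subset[OF x] collapse_quot_car[OF x]
    by (auto simp: quotient_functor_def intro!: restrict_ext)
next
  fix f g v assume a: "f \<in> Mo" "g \<in> Mo" "mcod f = mdom g" "v \<in> car (quotient_functor F I) (mdom f)"
  have dc: "mdom f \<in> Ob" "mcod f \<in> Ob" using M.dom_cod_in_obj[OF a(1)] by auto
  have v: "v \<in> quot_car F I (mdom f)" "v \<in> car F (mdom f)" using a(4) dc quot_car_subset by auto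
  show "fmor (quotient_functor F I) (cComp M g f) v
      = fmor (quotient_functor F I) g (fmor (quotient_functor F I) f v)"
    using M.comp_in_mor[OF a(1-3)] a dc v collapse_in vfunctor_in[OF F a(1)]
      collapse_fmor[OF a(2)] vfunctor_comp[OF F a(1-3)] by simp
qed (use vect_obj_quotient vect_mor_quotient in \<open>auto simp: quotient_functor_def\<close>)

lemma vnat_quotient_map: "is_vnat G M (quotient_map F I)"
proof (rule is_vnatI)
  fix x assume x: "x \<in> Ob"
  show "vect_mor G (fobj (nsrc (quotient_map F I)) x) (fobj (ntgt (quotient_map F I)) x)
      (ncomp (quotient_map F I) x)"
  proof (rule vect_morI)
    fix v1 v2 assume "v1 \<in> car (nsrc (quotient_map F I)) x" "v2 \<in> car (nsrc (quotient_map F I)) x"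
      "ncomp (quotient_map F I) x v1 = ncomp (quotient_map F I) x v2"
      "ncomp (quotient_map F I) x v1 \<noteq> vpt (fobj (ntgt (quotient_map F I)) x)"
    thus "v1 = v2" using x by (auto simp: collapse_def split: if_splits)
  qed (use x vfunctor_obj[OF F x] collapse_in vfunctor_pt_in[OF F x] collapse_pt collapse_act
         vfunctor_act_closed[OF F x] in \<open>auto simp: quotient_map_def\<close>)
next
  fix f v assume "f \<in> Mo" "v \<in> car (nsrc (quotient_map F I)) (mdom f)"
  thus "ncomp (quotient_map F I) (mcod f) (fmor (nsrc (quotient_map F I)) f v)
      = fmor (ntgt (quotient_map F I)) f (ncomp (quotient_map F I) (mdom f) v)"
    using M.dom_cod_in_obj vfunctor_in[OF F] collapse_in collapse_fmor by simp
qed (use F is_vfunctor_quotient in \<open>simp_all add: quotient_map_def\<close>)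

end

section \<open>Monomorphisms and epimorphisms\<close>

definition inj_components :: "('o,'a,'g) vnat \<Rightarrow> bool" where
  "inj_components t \<longleftrightarrow> (\<forall>x\<in>Ob. inj_on (ncomp t x) (car (nsrc t) x))"

definition surj_components :: "('o,'a,'g) vnat \<Rightarrow> bool" where
  "surj_components t \<longleftrightarrow> (\<forall>x\<in>Ob. ncomp t x ` car (nsrc t) x = car (ntgt t) x)"

lemma inj_componentsD:
  "inj_components t \<Longrightarrow> x \<in> Ob \<Longrightarrow> a \<in> car (nsrc t) x \<Longrightarrow> b \<in> car (nsrc t) x \<Longrightarrow>
   ncomp t x a = ncomp t x b \<Longrightarrow> a = b"
  unfolding inj_components_def by (meson inj_onD)

lemma surj_componentsE:
  "surj_components t \<Longrightarrow> x \<in> Ob \<Longrightarrow> c \<in> car (ntgt t) x \<Longrightarrow>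
   (\<And>a. a \<in> car (nsrc t) x \<Longrightarrow> c = ncomp t x a \<Longrightarrow> P) \<Longrightarrow> P"
  unfolding surj_components_def by blast

lemma mono_FV_if_inj_components:
  assumes t: "is_vnat G M t" and inj: "inj_components t"
  shows "mono FV t"
  unfolding mono_def
proof (intro conjI ballI impI)
  show "t \<in> cMor FV" using t by simp
  fix g h assume "g \<in> cMor FV" "h \<in> cMor FV" "cCod FV g = cDom FV t \<and> cCod FV h = cDom FV t \<and>
      cDom FV g = cDom FV h \<and> cComp FV t g = cComp FV t h"
  hence gh: "is_vnat G M g" "is_vnat G M h" "ntgt g = nsrc t" "ntgt h = nsrc t" "nsrc g = nsrc h"
    and eq: "cComp FV t g = cComp FV t h" by auto
  show "g = h"
  proof (rule vnat_eqI[OF gh(1,2,5)])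
    fix x v assume xv: "x \<in> Ob" "v \<in> car (nsrc g) x"
    have "ncomp t x (ncomp g x v) = ncomp t x (ncomp h x v)"
      using arg_cong[OF eq, of "\<lambda>s. ncomp s x v"] xv gh(5) by simp
    thus "ncomp g x v = ncomp h x v"
      using inj_componentsD[OF inj xv(1)] vnat_in[OF gh(1) xv] vnat_in[OF gh(2) xv(1)] xv gh by simp
  qed (use gh in simp)
qed

lemma mono_FV_kernel_trivial:
  assumes mono: "mono FV t" and x: "x \<in> Ob" and v: "v \<in> car (nsrc t) x"
    and zero: "ncomp t x v = pt (ntgt t) x"
  shows "v = pt (nsrc t) x"
proof -
  have t: "is_vnat G M t" using mono by (simp add: mono_def)
  define K where "K = (\<lambda>x. {v \<in> car (nsrc t) x. ncomp t x v \<in> {pt (ntgt t) x}})"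
  have K: "is_subfunctor (nsrc t) K"
    unfolding K_def by (rule is_subfunctor_vimage[OF t is_subfunctor_pt[OF vnat_tgt[OF t]]])
  have i: "is_vnat G M (subfunctor_incl (nsrc t) K)"
    using vnat_subfunctor_incl[OF vnat_src[OF t] K] .
  have z: "is_vnat G M (zero_map (subfunctor (nsrc t) K) (nsrc t))"
    using vnat_zero_map[OF is_vfunctor_subfunctor[OF vnat_src[OF t] K] vnat_src[OF t]] .
  have "cComp FV t (subfunctor_incl (nsrc t) K) = cComp FV t (zero_map (subfunctor (nsrc t) K) (nsrc t))"
    by (rule vnat_eqI) (use vnat_cComp[OF t i] vnat_cComp[OF t z] vnat_pt[OF t] in \<open>auto simp: K_def\<close>)
  hence "subfunctor_incl (nsrc t) K = zero_map (subfunctor (nsrc t) K) (nsrc t)"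
    using monoD[OF mono] i z by simp
  hence "ncomp (subfunctor_incl (nsrc t) K) x v = ncomp (zero_map (subfunctor (nsrc t) K) (nsrc t)) x v"
    by simp
  moreover have "v \<in> K x" using v zero by (simp add: K_def)
  ultimately show ?thesis using x by simp
qed

lemma mono_FV_iff: "mono FV t \<longleftrightarrow> is_vnat G M t \<and> inj_components t"
proof
  assume mono: "mono FV t"
  hence t: "is_vnat G M t" by (simp add: mono_def)
  have "inj_components t"
    unfolding inj_components_def
  proof (intro ballI inj_onI)
    fix x v1 v2 assume a: "x \<in> Ob" "v1 \<in> car (nsrc t) x" "v2 \<in> car (nsrc t) x" "ncomp t x v1 = ncomp t x v2"
    show "v1 = v2"
    proof (cases "ncomp t x v1 = pt (ntgt t) x")
      case True
      thus ?thesis using mono_FV_kernel_trivial[OF mono a(1)] a by metis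
    next
      case False
      thus ?thesis using vnat_inj[OF t a] by simp
    qed
  qed
  with t show "is_vnat G M t \<and> inj_components t" ..
qed (use mono_FV_if_inj_components in blast)

lemma epi_FV_if_surj_components:
  assumes t: "is_vnat G M t" and surj: "surj_components t"
  shows "epi FV t"
  unfolding epi_def
proof (intro conjI ballI impI)
  show "t \<in> cMor FV" using t by simp
  fix g h assume "g \<in> cMor FV" "h \<in> cMor FV" "cDom FV g = cCod FV t \<and> cDom FV h = cCod FV t \<and>
      cCod FV g = cCod FV h \<and> cComp FV g t = cComp FV h t"
  hence gh: "is_vnat G M g" "is_vnat G M h" "nsrc g = ntgt t" "nsrc h = ntgt t" "ntgt g = ntgt h"
    and eq: "cComp FV g t = cComp FV h t" by auto
  show "g = h"
  proof (rule vnat_eqI[OF gh(1,2)])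
    fix x w assume xw: "x \<in> Ob" "w \<in> car (nsrc g) x"
    show "ncomp g x w = ncomp h x w"
    proof (rule surj_componentsE[OF surj xw(1)])
      show "w \<in> car (ntgt t) x" using xw gh(3) by simp
      fix v assume "v \<in> car (nsrc t) x" "w = ncomp t x v"
      thus ?thesis using arg_cong[OF eq, of "\<lambda>s. ncomp s x v"] xw(1) by simp
    qed
  qed (use gh in simp_all)
qed

lemma epi_FV_cokernel_trivial:
  assumes epi: "epi FV t" and x: "x \<in> Ob" and w: "w \<in> car (ntgt t) x"
  shows "w \<in> ncomp t x ` car (nsrc t) x"
proof -
  have t: "is_vnat G M t" using epi by (simp add: epi_def)
  define H where "H = ntgt t"
  define I where "I = (\<lambda>x. ncomp t x ` car (nsrc t) x)"
  have H: "is_vfunctor G M H" using vnat_tgt[OF t] by (simp add: H_def)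
  have I: "is_subfunctor H I"
    unfolding I_def H_def by (rule is_subfunctor_image[OF t is_subfunctor_car[OF vnat_src[OF t]]])
  have q: "is_vnat G M (quotient_map H I)" using vnat_quotient_map[OF H I] .
  have z: "is_vnat G M (zero_map H (quotient_functor H I))"
    using vnat_zero_map[OF H is_vfunctor_quotient[OF H I]] .
  have "cComp FV (quotient_map H I) t = cComp FV (zero_map H (quotient_functor H I)) t"
    by (rule vnat_eqI)
      (use vnat_cComp[OF q t] vnat_cComp[OF z t] vnat_in[OF t] in \<open>auto simp: H_def I_def collapse_def\<close>)
  hence "quotient_map H I = zero_map H (quotient_functor H I)"
    using epiD[OF epi] q z by (simp add: H_def)
  hence "ncomp (quotient_map H I) x w = ncomp (zero_map H (quotient_functor H I)) x w" by simp
  hence "w \<in> I x \<or> w = pt H x" using x w by (simp add: H_def collapse_def split: if_splits)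
  thus ?thesis using subfunctor_pt[OF I x] by (auto simp: I_def)
qed

lemma epi_FV_iff: "epi FV t \<longleftrightarrow> is_vnat G M t \<and> surj_components t"
proof
  assume epi: "epi FV t"
  hence t: "is_vnat G M t" by (simp add: epi_def)
  have "surj_components t"
    unfolding surj_components_def using vnat_in[OF t] epi_FV_cokernel_trivial[OF epi] by blast
  with t show "is_vnat G M t \<and> surj_components t" ..
qed (use epi_FV_if_surj_components in blast)

definition lift_along :: "('o,'a,'g) vnat \<Rightarrow> ('o,'a,'g) vnat \<Rightarrow> ('o,'a,'g) vnat" where
  "lift_along i f = (nsrc f, nsrc i,
     \<lambda>x\<in>Ob. \<lambda>v\<in>car (nsrc f) x. inv_into (car (nsrc i) x) (ncomp i x) (ncomp f x v))"

lemma lift_along_simps [simp]: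
  "nsrc (lift_along i f) = nsrc f"
  "ntgt (lift_along i f) = nsrc i"
  by (auto simp: lift_along_def)

context
  fixes i f
  assumes i: "is_vnat G M i" and f: "is_vnat G M f" and tgt: "ntgt f = ntgt i"
    and inj: "inj_components i"
    and img: "\<forall>x\<in>Ob. ncomp f x ` car (nsrc f) x \<subseteq> ncomp i x ` car (nsrc i) x"
begin

lemma lift_along_in:
  assumes x: "x \<in> Ob" and v: "v \<in> car (nsrc f) x"
  shows "ncomp (lift_along i f) x v \<in> car (nsrc i) x"
proof -
  have "ncomp f x v \<in> ncomp i x ` car (nsrc i) x" using img x v by blast
  thus ?thesis using x v by (simp add: lift_along_def inv_into_into)
qed

lemma ncomp_lift_along:
  assumes x: "x \<in> Ob" and v: "v \<in> car (nsrc f) x"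
  shows "ncomp i x (ncomp (lift_along i f) x v) = ncomp f x v"
proof -
  have "ncomp f x v \<in> ncomp i x ` car (nsrc i) x" using img x v by blast
  thus ?thesis using x v by (simp add: lift_along_def f_inv_into_f)
qed

lemma lift_along_unique:
  "x \<in> Ob \<Longrightarrow> v \<in> car (nsrc f) x \<Longrightarrow> a \<in> car (nsrc i) x \<Longrightarrow> ncomp i x a = ncomp f x v \<Longrightarrow>
   ncomp (lift_along i f) x v = a"
  using inj_componentsD[OF inj] lift_along_in ncomp_lift_along by metis

lemma vnat_lift_along: "is_vnat G M (lift_along i f)"
proof (rule is_vnatI)
  have A: "is_vfunctor G M (nsrc i)" using vnat_src[OF i] .
  fix x assume x: "x \<in> Ob"
  show "vect_mor G (fobj (nsrc (lift_along i f)) x) (fobj (ntgt (lift_along i f)) x) (ncomp (lift_along i f) x)"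
  proof (rule vect_morI)
    show "ncomp (lift_along i f) x \<in> extensional (vcar (fobj (nsrc (lift_along i f)) x))"
      using x by (simp add: lift_along_def)
    show "ncomp (lift_along i f) x (vpt (fobj (nsrc (lift_along i f)) x)) = vpt (fobj (ntgt (lift_along i f)) x)"
      using lift_along_unique[OF x vfunctor_pt_in[OF vnat_src[OF f] x] vfunctor_pt_in[OF A x]]
        vnat_pt[OF f x] vnat_pt[OF i x] tgt by simp
  next
    fix g v assume g: "g \<in> carrier G" and "v \<in> vcar (fobj (nsrc (lift_along i f)) x)"
    hence v: "v \<in> car (nsrc f) x" by simp
    have u: "ncomp (lift_along i f) x v \<in> car (nsrc i) x" using lift_along_in[OF x v] .
    show "ncomp (lift_along i f) x (vact (fobj (nsrc (lift_along i f)) x) g v)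
        = vact (fobj (ntgt (lift_along i f)) x) g (ncomp (lift_along i f) x v)"
      using lift_along_unique[OF x vfunctor_act_closed[OF vnat_src[OF f] x g v] vfunctor_act_closed[OF A x g u]]
        vnat_act[OF f x g v] vnat_act[OF i x g u] ncomp_lift_along[OF x v] tgt by simp
  next
    fix v1 v2 assume v: "v1 \<in> vcar (fobj (nsrc (lift_along i f)) x)" "v2 \<in> vcar (fobj (nsrc (lift_along i f)) x)"
      and eq: "ncomp (lift_along i f) x v1 = ncomp (lift_along i f) x v2"
      and ne: "ncomp (lift_along i f) x v1 \<noteq> vpt (fobj (ntgt (lift_along i f)) x)"
    have "ncomp f x v1 \<noteq> pt (ntgt f) x"
      using ne lift_along_unique[OF x _ vfunctor_pt_in[OF A x]] vnat_pt[OF i x] tgt v by force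
    thus "v1 = v2" using vnat_inj[OF f x] v eq ncomp_lift_along[OF x] by (metis lift_along_simps(1))
  qed (use x vect_obj_pt_in vfunctor_obj[OF vnat_src[OF f] x] lift_along_in in auto)
next
  fix m v assume m: "m \<in> Mo" and "v \<in> car (nsrc (lift_along i f)) (mdom m)"
  hence v: "v \<in> car (nsrc f) (mdom m)" by simp
  have dc: "mdom m \<in> Ob" "mcod m \<in> Ob" using M.dom_cod_in_obj[OF m] by auto
  have u: "ncomp (lift_along i f) (mdom m) v \<in> car (nsrc i) (mdom m)" using lift_along_in[OF dc(1) v] .
  show "ncomp (lift_along i f) (mcod m) (fmor (nsrc (lift_along i f)) m v)
      = fmor (ntgt (lift_along i f)) m (ncomp (lift_along i f) (mdom m) v)"
    using lift_along_unique[OF dc(2) vfunctor_in[OF vnat_src[OF f] m v] vfunctor_in[OF vnat_src[OF i] m u]]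
      vnat_naturality[OF f m v] vnat_naturality[OF i m u] ncomp_lift_along[OF dc(1) v] tgt by simp
qed (use f i vnat_src in \<open>simp_all add: lift_along_def\<close>)

lemma cComp_lift_along: "cComp FV i (lift_along i f) = f"
  by (rule vnat_eqI) (use vnat_cComp[OF i vnat_lift_along] f tgt ncomp_lift_along in simp_all)

end

definition desc_along :: "('o,'a,'g) vnat \<Rightarrow> ('o,'a,'g) vnat \<Rightarrow> ('o,'a,'g) vnat" where
  "desc_along j f = (ntgt j, ntgt f,
     \<lambda>x\<in>Ob. \<lambda>c\<in>car (ntgt j) x. ncomp f x (inv_into (car (nsrc j) x) (ncomp j x) c))"

lemma desc_along_simps [simp]:
  "nsrc (desc_along j f) = ntgt j"
  "ntgt (desc_along j f) = ntgt f"
  by (auto simp: desc_along_def)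

context
  fixes j f
  assumes j: "is_vnat G M j" and f: "is_vnat G M f" and src: "nsrc f = nsrc j"
    and surj: "surj_components j"
    and compat: "\<forall>x\<in>Ob. \<forall>a1\<in>car (nsrc j) x. \<forall>a2\<in>car (nsrc j) x.
      ncomp j x a1 = ncomp j x a2 \<longrightarrow> ncomp f x a1 = ncomp f x a2"
    and reflect: "\<forall>x\<in>Ob. \<forall>a1\<in>car (nsrc j) x. \<forall>a2\<in>car (nsrc j) x.
      ncomp f x a1 = ncomp f x a2 \<and> ncomp f x a1 \<noteq> pt (ntgt f) x \<longrightarrow> ncomp j x a1 = ncomp j x a2"
begin

lemma ncomp_desc_along:
  assumes x: "x \<in> Ob" and a: "a \<in> car (nsrc j) x"
  shows "ncomp (desc_along j f) x (ncomp j x a) = ncomp f x a"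
proof -
  have im: "ncomp j x a \<in> ncomp j x ` car (nsrc j) x" using a by blast
  have "ncomp f x (inv_into (car (nsrc j) x) (ncomp j x) (ncomp j x a)) = ncomp f x a"
    using compat[rule_format, OF x inv_into_into[OF im] a] f_inv_into_f[OF im] by simp
  thus ?thesis using x vnat_in[OF j x a] by (simp add: desc_along_def)
qed

lemma vnat_desc_along: "is_vnat G M (desc_along j f)"
proof (rule is_vnatI)
  have C: "is_vfunctor G M (ntgt j)" using vnat_tgt[OF j] .
  have A: "is_vfunctor G M (nsrc j)" using vnat_src[OF j] .
  fix x assume x: "x \<in> Ob"
  show "vect_mor G (fobj (nsrc (desc_along j f)) x) (fobj (ntgt (desc_along j f)) x) (ncomp (desc_along j f) x)"
  proof (rule vect_morI)
    show "vect_obj G (fobj (nsrc (desc_along j f)) x)" using vfunctor_obj[OF C x] by simp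
    show "ncomp (desc_along j f) x \<in> extensional (vcar (fobj (nsrc (desc_along j f)) x))"
      using x by (simp add: desc_along_def)
    show "ncomp (desc_along j f) x (vpt (fobj (nsrc (desc_along j f)) x)) = vpt (fobj (ntgt (desc_along j f)) x)"
      using ncomp_desc_along[OF x vfunctor_pt_in[OF A x]] vnat_pt[OF j x] vnat_pt[OF f x] src by simp
  next
    fix c assume "c \<in> vcar (fobj (nsrc (desc_along j f)) x)"
    then obtain a where "a \<in> car (nsrc j) x" "c = ncomp j x a" using surj_componentsE[OF surj x] by auto
    thus "ncomp (desc_along j f) x c \<in> vcar (fobj (ntgt (desc_along j f)) x)"
      using ncomp_desc_along[OF x] vnat_in[OF f x] src by simp
  next
    fix g c assume g: "g \<in> carrier G" and "c \<in> vcar (fobj (nsrc (desc_along j f)) x)"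
    then obtain a where a: "a \<in> car (nsrc j) x" "c = ncomp j x a" using surj_componentsE[OF surj x] by auto
    show "ncomp (desc_along j f) x (vact (fobj (nsrc (desc_along j f)) x) g c)
        = vact (fobj (ntgt (desc_along j f)) x) g (ncomp (desc_along j f) x c)"
      using ncomp_desc_along[OF x vfunctor_act_closed[OF A x g a(1)]] ncomp_desc_along[OF x a(1)]
        vnat_act[OF j x g a(1)] vnat_act[OF f x g] a src by simp
  next
    fix c1 c2 assume c: "c1 \<in> vcar (fobj (nsrc (desc_along j f)) x)" "c2 \<in> vcar (fobj (nsrc (desc_along j f)) x)"
      and eq: "ncomp (desc_along j f) x c1 = ncomp (desc_along j f) x c2"
      and ne: "ncomp (desc_along j f) x c1 \<noteq> vpt (fobj (ntgt (desc_along j f)) x)"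
    obtain a1 where a1: "a1 \<in> car (nsrc j) x" "c1 = ncomp j x a1"
      using surj_componentsE[OF surj x] c(1) by auto
    obtain a2 where a2: "a2 \<in> car (nsrc j) x" "c2 = ncomp j x a2"
      using surj_componentsE[OF surj x] c(2) by auto
    have "ncomp f x a1 = ncomp f x a2" "ncomp f x a1 \<noteq> pt (ntgt f) x"
      using eq ne a1 a2 ncomp_desc_along[OF x] by simp_all
    thus "c1 = c2" using reflect a1 a2 x by blast
  qed
next
  fix m c assume m: "m \<in> Mo" and "c \<in> car (nsrc (desc_along j f)) (mdom m)"
  have dc: "mdom m \<in> Ob" "mcod m \<in> Ob" using M.dom_cod_in_obj[OF m] by auto
  obtain a where a: "a \<in> car (nsrc j) (mdom m)" "c = ncomp j (mdom m) a"
    using surj_componentsE[OF surj dc(1)] \<open>c \<in> car (nsrc (desc_along j f)) (mdom m)\<close> by auto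
  show "ncomp (desc_along j f) (mcod m) (fmor (nsrc (desc_along j f)) m c)
      = fmor (ntgt (desc_along j f)) m (ncomp (desc_along j f) (mdom m) c)"
    using ncomp_desc_along[OF dc(2) vfunctor_in[OF vnat_src[OF j] m a(1)]] ncomp_desc_along[OF dc(1) a(1)]
      vnat_naturality[OF j m a(1)] vnat_naturality[OF f m] a src by simp
qed (use j f vnat_tgt in \<open>simp_all add: desc_along_def\<close>)

lemma cComp_desc_along: "cComp FV (desc_along j f) j = f"
  by (rule vnat_eqI) (use vnat_cComp[OF vnat_desc_along j] f src ncomp_desc_along in simp_all)

end

end

section \<open>Bicartesian squares\<close>

lemma is_pullback_factor:
  assumes "is_pullback C i j k l" "comm_square C p q k l"
  obtains u where "u \<in> hom C (cDom C p) (cDom C i)" "cComp C i u = p" "cComp C j u = q"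
  using assms unfolding is_pullback_def comm_square_def by blast

lemma is_pushout_factor:
  assumes "is_pushout C i j k l" "comm_square C i j p q"
  obtains u where "u \<in> hom C (cCod C k) (cCod C p)" "cComp C u k = p" "cComp C u l = q"
proof -
  have "p \<in> cMor C" "q \<in> cMor C" "cDom C p = cCod C i \<and> cDom C q = cCod C j \<and> cCod C p = cCod C q \<and>
      cComp C p i = cComp C q j"
    using assms(2) unfolding comm_square_def by auto
  hence "\<exists>!u. u \<in> hom C (cCod C k) (cCod C p) \<and> cComp C u k = p \<and> cComp C u l = q"
    using assms(1) unfolding is_pushout_def by blast
  thus ?thesis using that by blast
qed

context fun_vect
begin

lemma comm_square_FV_iff:
  "comm_square FV i j k l \<longleftrightarrow>
   is_vnat G M i \<and> is_vnat G M j \<and> is_vnat G M k \<and> is_vnat G M l \<and>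
   nsrc i = nsrc j \<and> ntgt i = nsrc k \<and> ntgt j = nsrc l \<and> ntgt k = ntgt l \<and> cComp FV k i = cComp FV l j"
  unfolding comm_square_def by simp

lemma comm_square_ncomp:
  assumes sq: "comm_square FV i j k l" and x: "x \<in> Ob" and a: "a \<in> car (nsrc i) x"
  shows "ncomp k x (ncomp i x a) = ncomp l x (ncomp j x a)"
proof -
  have eq: "cComp FV k i = cComp FV l j" and src: "nsrc i = nsrc j"
    using sq unfolding comm_square_FV_iff by auto
  show ?thesis using arg_cong[OF eq, of "\<lambda>s. ncomp s x a"] x a src by simp
qed

lemma comm_square_FVI:
  assumes "is_vnat G M i" "is_vnat G M j" "is_vnat G M k" "is_vnat G M l"
    "nsrc i = nsrc j" "ntgt i = nsrc k" "ntgt j = nsrc l" "ntgt k = ntgt l"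
    "\<And>x a. x \<in> Ob \<Longrightarrow> a \<in> car (nsrc i) x \<Longrightarrow> ncomp k x (ncomp i x a) = ncomp l x (ncomp j x a)"
  shows "comm_square FV i j k l"
  unfolding comm_square_FV_iff
  by (intro conjI assms(1-8) vnat_eqI vnat_cComp) (use assms in simp_all)

definition preimage_in_image :: "('o,'a,'g) vnat \<Rightarrow> ('o,'a,'g) vnat \<Rightarrow> ('o,'a,'g) vnat \<Rightarrow> bool" where
  "preimage_in_image i k l \<longleftrightarrow>
     (\<forall>x\<in>Ob. \<forall>b\<in>car (nsrc k) x. ncomp k x b \<in> ncomp l x ` car (nsrc l) x \<longrightarrow> b \<in> ncomp i x ` car (nsrc i) x)"

lemma preimage_in_imageD:
  "preimage_in_image i k l \<Longrightarrow> x \<in> Ob \<Longrightarrow> b \<in> car (nsrc k) x \<Longrightarrow> c \<in> car (nsrc l) x \<Longrightarrow>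
   ncomp k x b = ncomp l x c \<Longrightarrow> \<exists>a\<in>car (nsrc i) x. b = ncomp i x a"
  unfolding preimage_in_image_def by blast

lemma lift_along_cone:
  assumes sq: "comm_square FV i j k l" and inj_i: "inj_components i" and inj_l: "inj_components l"
    and Q: "preimage_in_image i k l" and cone: "comm_square FV p q k l"
  shows "is_vnat G M (lift_along i p)" "cComp FV i (lift_along i p) = p" "cComp FV j (lift_along i p) = q"
proof -
  have s: "is_vnat G M i" "is_vnat G M j" "is_vnat G M l" "nsrc i = nsrc j" "ntgt i = nsrc k" "ntgt j = nsrc l"
    using sq unfolding comm_square_FV_iff by auto
  have p: "is_vnat G M p" "is_vnat G M q" "nsrc p = nsrc q" "ntgt p = nsrc k" "ntgt q = nsrc l"
    using cone unfolding comm_square_FV_iff by auto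
  have img: "\<forall>x\<in>Ob. ncomp p x ` car (nsrc p) x \<subseteq> ncomp i x ` car (nsrc i) x"
  proof (intro ballI subsetI)
    fix x w assume x: "x \<in> Ob" and "w \<in> ncomp p x ` car (nsrc p) x"
    then obtain v where v: "v \<in> car (nsrc p) x" "w = ncomp p x v" by blast
    have "ncomp p x v \<in> car (nsrc k) x" "ncomp q x v \<in> car (nsrc l) x"
      using vnat_in[OF p(1) x v(1)] vnat_in[OF p(2) x] v(1) p(3-5) by auto
    then obtain a where "a \<in> car (nsrc i) x" "ncomp p x v = ncomp i x a"
      using preimage_in_imageD[OF Q x] comm_square_ncomp[OF cone x v(1)] by blast
    thus "w \<in> ncomp i x ` car (nsrc i) x" using v(2) by blast
  qed
  have tgt: "ntgt p = ntgt i" using p s by simp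
  note lift = vnat_lift_along[OF s(1) p(1) tgt inj_i img] cComp_lift_along[OF s(1) p(1) tgt inj_i img]
    lift_along_in[OF s(1) p(1) tgt inj_i img] ncomp_lift_along[OF s(1) p(1) tgt inj_i img]
  show "is_vnat G M (lift_along i p)" "cComp FV i (lift_along i p) = p" using lift(1,2) .
  show "cComp FV j (lift_along i p) = q"
  proof (rule vnat_eqI)
    fix x v assume x: "x \<in> Ob" and "v \<in> car (nsrc (cComp FV j (lift_along i p))) x"
    hence v: "v \<in> car (nsrc p) x" by simp
    have u: "ncomp (lift_along i p) x v \<in> car (nsrc i) x" using lift(3)[OF x v] .
    have "ncomp l x (ncomp j x (ncomp (lift_along i p) x v)) = ncomp l x (ncomp q x v)"
      using comm_square_ncomp[OF sq x u] lift(4)[OF x v] comm_square_ncomp[OF cone x v] by simp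
    thus "ncomp (cComp FV j (lift_along i p)) x v = ncomp q x v"
      using inj_componentsD[OF inj_l x] vnat_in[OF s(2) x] vnat_in[OF p(2) x] u v s p x by simp
  qed (use p s vnat_cComp[OF s(2) lift(1)] tgt in simp_all)
qed

text \<open>The kernel of \<open>k\<close> lies in the image of \<open>i\<close>, where \<open>p\<close> vanishes because \<open>l\<close> is injective.\<close>

lemma cocone_kernel:
  assumes sq: "comm_square FV i j k l" and inj_l: "inj_components l" and Q: "preimage_in_image i k l"
    and cocone: "comm_square FV i j p q"
    and x: "x \<in> Ob" and b: "b \<in> car (nsrc k) x" and kb: "ncomp k x b = pt (ntgt k) x"
  shows "ncomp p x b = pt (ntgt p) x"
proof -
  have s: "is_vnat G M j" "is_vnat G M l" "nsrc i = nsrc j" "ntgt j = nsrc l" "ntgt k = ntgt l"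
    using sq unfolding comm_square_FV_iff by auto
  have p: "is_vnat G M q" "nsrc q = nsrc l" "ntgt p = ntgt q"
    using cocone s unfolding comm_square_FV_iff by auto
  have pt: "pt (nsrc l) x \<in> car (nsrc l) x" using vfunctor_pt_in[OF vnat_src[OF s(2)] x] .
  obtain a where a: "a \<in> car (nsrc i) x" "b = ncomp i x a"
    using preimage_in_imageD[OF Q x b pt] kb vnat_pt[OF s(2) x] s(5) by auto
  have "ncomp l x (ncomp j x a) = ncomp l x (pt (nsrc l) x)"
    using comm_square_ncomp[OF sq x a(1)] a(2) kb vnat_pt[OF s(2) x] s(5) by simp
  hence "ncomp j x a = pt (nsrc l) x"
    using inj_componentsD[OF inj_l x _ pt] vnat_in[OF s(1) x] a(1) s(3,4) by simp
  thus ?thesis using comm_square_ncomp[OF cocone x a(1)] a(2) vnat_pt[OF p(1) x] p(2,3) by simp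
qed

lemma desc_along_cocone:
  assumes sq: "comm_square FV i j k l" and surj_j: "surj_components j" and inj_l: "inj_components l"
    and surj_k: "surj_components k" and Q: "preimage_in_image i k l" and cocone: "comm_square FV i j p q"
  shows "is_vnat G M (desc_along k p)" "cComp FV (desc_along k p) k = p" "cComp FV (desc_along k p) l = q"
proof -
  have s: "is_vnat G M i" "is_vnat G M j" "is_vnat G M k" "is_vnat G M l"
    "nsrc i = nsrc j" "ntgt i = nsrc k" "ntgt j = nsrc l" "ntgt k = ntgt l"
    using sq unfolding comm_square_FV_iff by auto
  have p: "is_vnat G M p" "is_vnat G M q" "nsrc p = nsrc k" "nsrc q = nsrc l" "ntgt p = ntgt q"
    using cocone s unfolding comm_square_FV_iff by auto
  have compat: "\<forall>x\<in>Ob. \<forall>b1\<in>car (nsrc k) x. \<forall>b2\<in>car (nsrc k) x.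
      ncomp k x b1 = ncomp k x b2 \<longrightarrow> ncomp p x b1 = ncomp p x b2"
  proof (intro ballI impI)
    fix x b1 b2 assume x: "x \<in> Ob" and b: "b1 \<in> car (nsrc k) x" "b2 \<in> car (nsrc k) x"
      and eq: "ncomp k x b1 = ncomp k x b2"
    show "ncomp p x b1 = ncomp p x b2"
    proof (cases "ncomp k x b1 = pt (ntgt k) x")
      case True
      thus ?thesis using cocone_kernel[OF sq inj_l Q cocone x b(1)] cocone_kernel[OF sq inj_l Q cocone x b(2)] eq
        by simp
    next
      case False
      thus ?thesis using vnat_inj[OF s(3) x b eq] by simp
    qed
  qed
  have reflect: "\<forall>x\<in>Ob. \<forall>b1\<in>car (nsrc k) x. \<forall>b2\<in>car (nsrc k) x.
      ncomp p x b1 = ncomp p x b2 \<and> ncomp p x b1 \<noteq> pt (ntgt p) x \<longrightarrow> ncomp k x b1 = ncomp k x b2"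
  proof (intro ballI impI)
    fix x b1 b2 assume x: "x \<in> Ob" and b: "b1 \<in> car (nsrc k) x" "b2 \<in> car (nsrc k) x"
      and pb: "ncomp p x b1 = ncomp p x b2 \<and> ncomp p x b1 \<noteq> pt (ntgt p) x"
    have "b1 = b2" using vnat_inj[OF p(1) x _ _ conjunct1[OF pb] conjunct2[OF pb]] b p(3) by simp
    thus "ncomp k x b1 = ncomp k x b2" by simp
  qed
  note desc = vnat_desc_along[OF s(3) p(1,3) surj_k compat reflect]
    cComp_desc_along[OF s(3) p(1,3) surj_k compat reflect]
    ncomp_desc_along[OF s(3) p(1,3) surj_k compat reflect]
  show "is_vnat G M (desc_along k p)" "cComp FV (desc_along k p) k = p" using desc(1,2) .
  show "cComp FV (desc_along k p) l = q"
  proof (rule vnat_eqI)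
    fix x c assume x: "x \<in> Ob" and "c \<in> car (nsrc (cComp FV (desc_along k p) l)) x"
    hence "c \<in> car (ntgt j) x" using s(7) by simp
    then obtain a where a: "a \<in> car (nsrc j) x" "c = ncomp j x a" using surj_componentsE[OF surj_j x] by auto
    have a': "a \<in> car (nsrc i) x" using a(1) s(5) by simp
    have "ncomp (desc_along k p) x (ncomp l x c) = ncomp q x c"
      using comm_square_ncomp[OF sq x a', symmetric] desc(3)[OF x] vnat_in[OF s(1) x a'] s(6)
        comm_square_ncomp[OF cocone x a'] a(2)
      by simp
    thus "ncomp (cComp FV (desc_along k p) l) x c = ncomp q x c"
      using x a vnat_in[OF s(2) x] s(7) by simp
  qed (use desc s p vnat_cComp[OF desc(1) s(4)] in simp_all)
qed

lemma is_pullback_if_preimage_in_image: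
  assumes sq: "comm_square FV i j k l" and inj_i: "inj_components i" and inj_l: "inj_components l"
    and Q: "preimage_in_image i k l"
  shows "is_pullback FV i j k l"
  unfolding is_pullback_def
proof (intro conjI sq ballI impI)
  fix p q assume "p \<in> cMor FV" "q \<in> cMor FV" "cDom FV p = cDom FV q \<and> cCod FV p = cDom FV k \<and>
      cCod FV q = cDom FV l \<and> cComp FV k p = cComp FV l q"
  hence cone: "comm_square FV p q k l" using sq unfolding comm_square_def by auto
  note lift = lift_along_cone[OF sq inj_i inj_l Q cone]
  have mono_i: "mono FV i" using mono_FV_if_inj_components sq inj_i unfolding comm_square_FV_iff by blast
  show "\<exists>!u. u \<in> hom FV (cDom FV p) (cDom FV i) \<and> cComp FV i u = p \<and> cComp FV j u = q"
  proof (rule ex1I[of _ "lift_along i p"])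
    show "lift_along i p \<in> hom FV (cDom FV p) (cDom FV i) \<and> cComp FV i (lift_along i p) = p \<and>
        cComp FV j (lift_along i p) = q"
      using lift by (simp add: hom_def)
    fix u assume "u \<in> hom FV (cDom FV p) (cDom FV i) \<and> cComp FV i u = p \<and> cComp FV j u = q"
    thus "u = lift_along i p" using monoD[OF mono_i] lift by (auto simp: hom_def)
  qed
qed

lemma is_pushout_if_preimage_in_image:
  assumes sq: "comm_square FV i j k l" and surj_j: "surj_components j" and inj_l: "inj_components l"
    and surj_k: "surj_components k" and Q: "preimage_in_image i k l"
  shows "is_pushout FV i j k l"
  unfolding is_pushout_def
proof (intro conjI sq ballI impI)
  fix p q assume "p \<in> cMor FV" "q \<in> cMor FV" "cDom FV p = cCod FV i \<and> cDom FV q = cCod FV j \<and>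
      cCod FV p = cCod FV q \<and> cComp FV p i = cComp FV q j"
  hence cocone: "comm_square FV i j p q" using sq unfolding comm_square_def by auto
  note desc = desc_along_cocone[OF sq surj_j inj_l surj_k Q cocone]
  have epi_k: "epi FV k" using epi_FV_if_surj_components sq surj_k unfolding comm_square_FV_iff by blast
  show "\<exists>!u. u \<in> hom FV (cCod FV k) (cCod FV p) \<and> cComp FV u k = p \<and> cComp FV u l = q"
  proof (rule ex1I[of _ "desc_along k p"])
    show "desc_along k p \<in> hom FV (cCod FV k) (cCod FV p) \<and> cComp FV (desc_along k p) k = p \<and>
        cComp FV (desc_along k p) l = q"
      using desc by (simp add: hom_def)
    fix u assume "u \<in> hom FV (cCod FV k) (cCod FV p) \<and> cComp FV u k = p \<and> cComp FV u l = q"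
    thus "u = desc_along k p" using epiD[OF epi_k] desc by (auto simp: hom_def)
  qed
qed

lemma preimage_in_image_if_pullback:
  assumes pb: "is_pullback FV i j k l" and sq': "comm_square FV i' j' k l" and Q: "preimage_in_image i' k l"
  shows "preimage_in_image i k l"
  unfolding preimage_in_image_def
proof (intro ballI impI)
  obtain u where u: "u \<in> hom FV (cDom FV i') (cDom FV i)" "cComp FV i u = i'" "cComp FV j u = j'"
    by (rule is_pullback_factor[OF pb sq'])
  have uv: "is_vnat G M u" "nsrc u = nsrc i'" "ntgt u = nsrc i" using u(1) by (auto simp: hom_def)
  fix x b assume x: "x \<in> Ob" and b: "b \<in> car (nsrc k) x" "ncomp k x b \<in> ncomp l x ` car (nsrc l) x"
  then obtain a where a: "a \<in> car (nsrc i') x" "b = ncomp i' x a"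
    using preimage_in_imageD[OF Q x] by blast
  have "b = ncomp i x (ncomp u x a)" using a x uv arg_cong[OF u(2), of "\<lambda>s. ncomp s x a"] by simp
  thus "b \<in> ncomp i x ` car (nsrc i) x" using vnat_in[OF uv(1) x] a(1) uv by simp
qed

lemma preimage_in_image_if_pushout:
  assumes po: "is_pushout FV i j k l" and sq': "comm_square FV i j k' l'" and Q: "preimage_in_image i k' l'"
  shows "preimage_in_image i k l"
  unfolding preimage_in_image_def
proof (intro ballI impI)
  have s: "is_vnat G M k" "is_vnat G M l" "ntgt k = ntgt l" "nsrc k' = nsrc k" "nsrc l' = nsrc l"
    using po sq' unfolding is_pushout_def comm_square_FV_iff by auto
  obtain u where u: "u \<in> hom FV (cCod FV k) (cCod FV k')" "cComp FV u k = k'" "cComp FV u l = l'"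
    by (rule is_pushout_factor[OF po sq'])
  fix x b assume x: "x \<in> Ob" and b: "b \<in> car (nsrc k) x" "ncomp k x b \<in> ncomp l x ` car (nsrc l) x"
  then obtain c where c: "c \<in> car (nsrc l) x" "ncomp k x b = ncomp l x c" by blast
  have "ncomp k' x b = ncomp l' x c"
    using arg_cong[OF u(2), of "\<lambda>s. ncomp s x b"] arg_cong[OF u(3), of "\<lambda>s. ncomp s x c"] x b c by simp
  moreover have "b \<in> car (nsrc k') x" "c \<in> car (nsrc l') x" using b(1) c(1) s(4,5) by simp_all
  ultimately obtain a where "a \<in> car (nsrc i) x" "b = ncomp i x a"
    using preimage_in_imageD[OF Q x] by blast
  thus "b \<in> ncomp i x ` car (nsrc i) x" by blast
qed

definition pullback_family :: "('o,'a,'g) vnat \<Rightarrow> ('o,'a,'g) vnat \<Rightarrow> 'o \<Rightarrow> nat set" where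
  "pullback_family k l x = {b \<in> car (nsrc k) x. ncomp k x b \<in> ncomp l x ` car (nsrc l) x}"

definition pullback_incl :: "('o,'a,'g) vnat \<Rightarrow> ('o,'a,'g) vnat \<Rightarrow> ('o,'a,'g) vnat" where
  "pullback_incl k l = subfunctor_incl (nsrc k) (pullback_family k l)"

definition pullback_proj :: "('o,'a,'g) vnat \<Rightarrow> ('o,'a,'g) vnat \<Rightarrow> ('o,'a,'g) vnat" where
  "pullback_proj k l = lift_along l (cComp FV k (pullback_incl k l))"

context
  fixes k l
  assumes k: "is_vnat G M k" and l: "is_vnat G M l" and tgt: "ntgt k = ntgt l" and inj_l: "inj_components l"
begin

lemma is_subfunctor_pullback_family: "is_subfunctor (nsrc k) (pullback_family k l)"
proof -
  have "is_subfunctor (ntgt k) (\<lambda>x. ncomp l x ` car (nsrc l) x)"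
    using is_subfunctor_image[OF l is_subfunctor_car[OF vnat_src[OF l]]] tgt by simp
  from is_subfunctor_vimage[OF k this] show ?thesis by (simp add: pullback_family_def[abs_def])
qed

lemma vnat_pullback_incl: "is_vnat G M (pullback_incl k l)"
  unfolding pullback_incl_def by (rule vnat_subfunctor_incl[OF vnat_src[OF k] is_subfunctor_pullback_family])

lemma inj_components_pullback_incl: "inj_components (pullback_incl k l)"
  unfolding inj_components_def pullback_incl_def by (auto intro!: inj_onI)

lemma pullback_proj_props:
  shows vnat_pullback_proj: "is_vnat G M (pullback_proj k l)"
    and pullback_proj_in: "\<And>x b. x \<in> Ob \<Longrightarrow> b \<in> pullback_family k l x \<Longrightarrow>
      ncomp (pullback_proj k l) x b \<in> car (nsrc l) x"
    and ncomp_pullback_proj: "\<And>x b. x \<in> Ob \<Longrightarrow> b \<in> pullback_family k l x \<Longrightarrow>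
      ncomp l x (ncomp (pullback_proj k l) x b) = ncomp k x b"
proof -
  have ki: "is_vnat G M (cComp FV k (pullback_incl k l))"
    using vnat_cComp[OF k vnat_pullback_incl] by (simp add: pullback_incl_def)
  have tgt': "ntgt (cComp FV k (pullback_incl k l)) = ntgt l" using tgt by simp
  have img: "\<forall>x\<in>Ob. ncomp (cComp FV k (pullback_incl k l)) x ` car (nsrc (cComp FV k (pullback_incl k l))) x
      \<subseteq> ncomp l x ` car (nsrc l) x"
    by (auto simp: pullback_incl_def pullback_family_def)
  note lift = vnat_lift_along[OF l ki tgt' inj_l img]
    lift_along_in[OF l ki tgt' inj_l img] ncomp_lift_along[OF l ki tgt' inj_l img]
  show "is_vnat G M (pullback_proj k l)" using lift by (simp add: pullback_proj_def)
  fix x b assume "x \<in> Ob" "b \<in> pullback_family k l x"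
  thus "ncomp (pullback_proj k l) x b \<in> car (nsrc l) x" "ncomp l x (ncomp (pullback_proj k l) x b) = ncomp k x b"
    using lift(2,3)[of x b] by (simp_all add: pullback_proj_def pullback_incl_def)
qed

lemma comm_square_pullback: "comm_square FV (pullback_incl k l) (pullback_proj k l) k l"
proof (rule comm_square_FVI[OF vnat_pullback_incl vnat_pullback_proj k l])
  fix x b assume "x \<in> Ob" "b \<in> car (nsrc (pullback_incl k l)) x"
  thus "ncomp k x (ncomp (pullback_incl k l) x b) = ncomp l x (ncomp (pullback_proj k l) x b)"
    using ncomp_pullback_proj by (simp add: pullback_incl_def)
qed (use tgt in \<open>simp_all add: pullback_incl_def pullback_proj_def\<close>)

lemma preimage_in_image_pullback: "preimage_in_image (pullback_incl k l) k l"
  unfolding preimage_in_image_def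
proof (intro ballI impI)
  fix x b assume "x \<in> Ob" "b \<in> car (nsrc k) x" "ncomp k x b \<in> ncomp l x ` car (nsrc l) x"
  hence "b \<in> car (nsrc (pullback_incl k l)) x" "ncomp (pullback_incl k l) x b = b"
    by (simp_all add: pullback_family_def pullback_incl_def)
  thus "b \<in> ncomp (pullback_incl k l) x ` car (nsrc (pullback_incl k l)) x" by (metis image_eqI)
qed

lemma surj_components_pullback_proj:
  assumes surj_k: "surj_components k" shows "surj_components (pullback_proj k l)"
  unfolding surj_components_def
proof (intro ballI equalityI subsetI)
  fix x assume x: "x \<in> Ob"
  fix c assume "c \<in> ncomp (pullback_proj k l) x ` car (nsrc (pullback_proj k l)) x"
  thus "c \<in> car (ntgt (pullback_proj k l)) x"
    using vnat_in[OF vnat_pullback_proj x] by blast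
next
  fix x c assume x: "x \<in> Ob" and "c \<in> car (ntgt (pullback_proj k l)) x"
  hence c: "c \<in> car (nsrc l) x" by (simp add: pullback_proj_def)
  obtain b where b: "b \<in> car (nsrc k) x" "ncomp l x c = ncomp k x b"
    using surj_componentsE[OF surj_k x, of "ncomp l x c"] vnat_in[OF l x c] tgt by metis
  hence bP: "b \<in> pullback_family k l x" using c by (force simp: pullback_family_def)
  have "ncomp (pullback_proj k l) x b = c"
    using inj_componentsD[OF inj_l x pullback_proj_in[OF x bP] c] ncomp_pullback_proj[OF x bP] b(2) by simp
  thus "c \<in> ncomp (pullback_proj k l) x ` car (nsrc (pullback_proj k l)) x"
    using bP x by (force simp: pullback_proj_def pullback_incl_def)
qed

end

definition pushout_family :: "('o,'a,'g) vnat \<Rightarrow> ('o,'a,'g) vnat \<Rightarrow> 'o \<Rightarrow> nat set" where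
  "pushout_family i j x = ncomp i x ` {a \<in> car (nsrc j) x. ncomp j x a \<in> {pt (ntgt j) x}}"

definition pushout_quot :: "('o,'a,'g) vnat \<Rightarrow> ('o,'a,'g) vnat \<Rightarrow> ('o,'a,'g) vnat" where
  "pushout_quot i j = quotient_map (ntgt i) (pushout_family i j)"

definition pushout_map :: "('o,'a,'g) vnat \<Rightarrow> ('o,'a,'g) vnat \<Rightarrow> ('o,'a,'g) vnat" where
  "pushout_map i j = desc_along j (cComp FV (pushout_quot i j) i)"

context
  fixes i j
  assumes i: "is_vnat G M i" and j: "is_vnat G M j" and src: "nsrc i = nsrc j"
    and inj_i: "inj_components i" and surj_j: "surj_components j"
begin

lemma is_subfunctor_pushout_family: "is_subfunctor (ntgt i) (pushout_family i j)"
  using is_subfunctor_image[OF i] is_subfunctor_vimage[OF j is_subfunctor_pt[OF vnat_tgt[OF j]]] src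
  unfolding pushout_family_def by simp

lemma pushout_family_iff:
  "x \<in> Ob \<Longrightarrow> a \<in> car (nsrc i) x \<Longrightarrow> ncomp i x a \<in> pushout_family i j x \<longleftrightarrow> ncomp j x a = pt (ntgt j) x"
  using inj_componentsD[OF inj_i] src unfolding pushout_family_def by auto

lemma collapse_pushout_eq_pt_iff:
  assumes x: "x \<in> Ob" and a: "a \<in> car (nsrc i) x"
  shows "collapse (ntgt i) (pushout_family i j) x (ncomp i x a) = pt (ntgt i) x \<longleftrightarrow> ncomp j x a = pt (ntgt j) x"
  using pushout_family_iff[OF x a] subfunctor_pt[OF is_subfunctor_pushout_family x] by (auto simp: collapse_def)

lemma vnat_pushout_quot: "is_vnat G M (pushout_quot i j)"
  unfolding pushout_quot_def by (rule vnat_quotient_map[OF vnat_tgt[OF i] is_subfunctor_pushout_family])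

lemma surj_components_pushout_quot: "surj_components (pushout_quot i j)"
  unfolding surj_components_def
proof (intro ballI equalityI subsetI)
  fix x w assume "x \<in> Ob" "w \<in> ncomp (pushout_quot i j) x ` car (nsrc (pushout_quot i j)) x"
  thus "w \<in> car (ntgt (pushout_quot i j)) x" using vnat_in[OF vnat_pushout_quot] by blast
next
  fix x w assume x: "x \<in> Ob" and "w \<in> car (ntgt (pushout_quot i j)) x"
  hence w: "w \<in> quot_car (ntgt i) (pushout_family i j) x" by (simp add: pushout_quot_def)
  have "w \<in> car (ntgt i) x" "ncomp (pushout_quot i j) x w = w"
    using w x quot_car_subset[OF vnat_tgt[OF i] is_subfunctor_pushout_family x]
      collapse_quot_car[OF vnat_tgt[OF i] is_subfunctor_pushout_family x w]
    by (auto simp: pushout_quot_def)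
  thus "w \<in> ncomp (pushout_quot i j) x ` car (nsrc (pushout_quot i j)) x"
    by (force simp: pushout_quot_def)
qed

lemma collapse_pushout_compat:
  assumes x: "x \<in> Ob" and a: "a1 \<in> car (nsrc i) x" "a2 \<in> car (nsrc i) x" and eq: "ncomp j x a1 = ncomp j x a2"
  shows "collapse (ntgt i) (pushout_family i j) x (ncomp i x a1) = collapse (ntgt i) (pushout_family i j) x (ncomp i x a2)"
proof (cases "ncomp j x a1 = pt (ntgt j) x")
  case True
  thus ?thesis using collapse_pushout_eq_pt_iff[OF x a(1)] collapse_pushout_eq_pt_iff[OF x a(2)] eq by simp
next
  case False
  thus ?thesis using vnat_inj[OF j x _ _ eq] a src by simp
qed

lemma collapse_pushout_reflect:
  assumes x: "x \<in> Ob" and a: "a1 \<in> car (nsrc i) x" "a2 \<in> car (nsrc i) x"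
    and eq: "collapse (ntgt i) (pushout_family i j) x (ncomp i x a1) = collapse (ntgt i) (pushout_family i j) x (ncomp i x a2)"
    and ne: "collapse (ntgt i) (pushout_family i j) x (ncomp i x a1) \<noteq> pt (ntgt i) x"
  shows "a1 = a2"
proof -
  have "ncomp i x a1 = ncomp i x a2" using eq ne unfolding collapse_def by (simp split: if_splits)
  thus ?thesis using inj_componentsD[OF inj_i x a] by simp
qed

lemma pushout_map_props:
  shows vnat_pushout_map: "is_vnat G M (pushout_map i j)"
    and ncomp_pushout_map: "\<And>x a. x \<in> Ob \<Longrightarrow> a \<in> car (nsrc i) x \<Longrightarrow>
      ncomp (pushout_map i j) x (ncomp j x a) = collapse (ntgt i) (pushout_family i j) x (ncomp i x a)"
proof -
  have qi: "is_vnat G M (cComp FV (pushout_quot i j) i)"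
    using vnat_cComp[OF vnat_pushout_quot i] by (simp add: pushout_quot_def)
  have src': "nsrc (cComp FV (pushout_quot i j) i) = nsrc j" using src by simp
  have q: "\<And>x a. x \<in> Ob \<Longrightarrow> a \<in> car (nsrc j) x \<Longrightarrow>
      ncomp (cComp FV (pushout_quot i j) i) x a = collapse (ntgt i) (pushout_family i j) x (ncomp i x a)"
    using vnat_in[OF i] src by (simp add: pushout_quot_def)
  have compat: "\<forall>x\<in>Ob. \<forall>a1\<in>car (nsrc j) x. \<forall>a2\<in>car (nsrc j) x.
      ncomp j x a1 = ncomp j x a2 \<longrightarrow>
      ncomp (cComp FV (pushout_quot i j) i) x a1 = ncomp (cComp FV (pushout_quot i j) i) x a2"
  proof (intro ballI impI)
    fix x a1 a2 assume "x \<in> Ob" "a1 \<in> car (nsrc j) x" "a2 \<in> car (nsrc j) x" "ncomp j x a1 = ncomp j x a2"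
    thus "ncomp (cComp FV (pushout_quot i j) i) x a1 = ncomp (cComp FV (pushout_quot i j) i) x a2"
      using collapse_pushout_compat[of x a1 a2] q src by simp
  qed
  have reflect: "\<forall>x\<in>Ob. \<forall>a1\<in>car (nsrc j) x. \<forall>a2\<in>car (nsrc j) x.
      ncomp (cComp FV (pushout_quot i j) i) x a1 = ncomp (cComp FV (pushout_quot i j) i) x a2 \<and>
      ncomp (cComp FV (pushout_quot i j) i) x a1 \<noteq> pt (ntgt (cComp FV (pushout_quot i j) i)) x \<longrightarrow>
      ncomp j x a1 = ncomp j x a2"
  proof (intro ballI impI)
    fix x a1 a2 assume x: "x \<in> Ob" and a: "a1 \<in> car (nsrc j) x" "a2 \<in> car (nsrc j) x"
      and h: "ncomp (cComp FV (pushout_quot i j) i) x a1 = ncomp (cComp FV (pushout_quot i j) i) x a2 \<and>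
        ncomp (cComp FV (pushout_quot i j) i) x a1 \<noteq> pt (ntgt (cComp FV (pushout_quot i j) i)) x"
    have "a1 = a2"
      using collapse_pushout_reflect[of x a1 a2] h q[OF x] a src x by (simp add: pushout_quot_def)
    thus "ncomp j x a1 = ncomp j x a2" by simp
  qed
  note desc = vnat_desc_along[OF j qi src' surj_j compat reflect]
    ncomp_desc_along[OF j qi src' surj_j compat reflect]
  show "is_vnat G M (pushout_map i j)" using desc by (simp add: pushout_map_def)
  fix x a assume "x \<in> Ob" "a \<in> car (nsrc i) x"
  thus "ncomp (pushout_map i j) x (ncomp j x a) = collapse (ntgt i) (pushout_family i j) x (ncomp i x a)"
    using desc(2) q src by (simp add: pushout_map_def)
qed

lemma comm_square_pushout: "comm_square FV i j (pushout_quot i j) (pushout_map i j)"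
proof (rule comm_square_FVI[OF i j vnat_pushout_quot vnat_pushout_map src])
  fix x a assume "x \<in> Ob" "a \<in> car (nsrc i) x"
  thus "ncomp (pushout_quot i j) x (ncomp i x a) = ncomp (pushout_map i j) x (ncomp j x a)"
    using ncomp_pushout_map vnat_in[OF i] by (simp add: pushout_quot_def)
qed (simp_all add: pushout_quot_def pushout_map_def)

lemma preimage_in_image_pushout: "preimage_in_image i (pushout_quot i j) (pushout_map i j)"
  unfolding preimage_in_image_def
proof (intro ballI impI)
  fix x b assume x: "x \<in> Ob" and "b \<in> car (nsrc (pushout_quot i j)) x"
    and "ncomp (pushout_quot i j) x b \<in> ncomp (pushout_map i j) x ` car (nsrc (pushout_map i j)) x"
  then obtain c where b: "b \<in> car (ntgt i) x" and c: "c \<in> car (ntgt j) x"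
    and eq: "ncomp (pushout_quot i j) x b = ncomp (pushout_map i j) x c"
    by (auto simp: pushout_quot_def pushout_map_def)
  obtain a where a: "a \<in> car (nsrc j) x" "c = ncomp j x a" using surj_componentsE[OF surj_j x c] by auto
  have a': "a \<in> car (nsrc i) x" using a(1) src by simp
  have eq': "collapse (ntgt i) (pushout_family i j) x b = collapse (ntgt i) (pushout_family i j) x (ncomp i x a)"
    using eq ncomp_pushout_map[OF x a'] a(2) x b by (simp add: pushout_quot_def)
  show "b \<in> ncomp i x ` car (nsrc i) x"
  proof (cases "b \<in> pushout_family i j x")
    case True
    thus ?thesis by (auto simp: pushout_family_def src)
  next
    case False
    hence "b \<noteq> pt (ntgt i) x" using subfunctor_pt[OF is_subfunctor_pushout_family x] by auto
    hence "b = ncomp i x a" using eq' False by (auto simp: collapse_def split: if_splits)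
    thus ?thesis using a' by blast
  qed
qed

lemma inj_components_pushout_map: "inj_components (pushout_map i j)"
  unfolding inj_components_def
proof (intro ballI inj_onI)
  fix x c1 c2 assume x: "x \<in> Ob" and c: "c1 \<in> car (nsrc (pushout_map i j)) x" "c2 \<in> car (nsrc (pushout_map i j)) x"
    and eq: "ncomp (pushout_map i j) x c1 = ncomp (pushout_map i j) x c2"
  obtain a1 where a1: "a1 \<in> car (nsrc j) x" "c1 = ncomp j x a1"
    using surj_componentsE[OF surj_j x] c(1) by (auto simp: pushout_map_def)
  obtain a2 where a2: "a2 \<in> car (nsrc j) x" "c2 = ncomp j x a2"
    using surj_componentsE[OF surj_j x] c(2) by (auto simp: pushout_map_def)
  have a: "a1 \<in> car (nsrc i) x" "a2 \<in> car (nsrc i) x" using a1(1) a2(1) src by simp_all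
  let ?q = "collapse (ntgt i) (pushout_family i j) x"
  have eq': "?q (ncomp i x a1) = ?q (ncomp i x a2)"
    using eq a1(2) a2(2) ncomp_pushout_map[OF x a(1)] ncomp_pushout_map[OF x a(2)] by simp
  show "c1 = c2"
  proof (cases "?q (ncomp i x a1) = pt (ntgt i) x")
    case True
    have "ncomp j x a1 = pt (ntgt j) x" using True collapse_pushout_eq_pt_iff[OF x a(1)] by simp
    moreover have "ncomp j x a2 = pt (ntgt j) x" using True eq' collapse_pushout_eq_pt_iff[OF x a(2)] by simp
    ultimately show ?thesis using a1(2) a2(2) by simp
  next
    case False
    thus ?thesis using collapse_pushout_reflect[OF x a eq'] a1(2) a2(2) by simp
  qed
qed

end

lemma is_pullback_iff_preimage_in_image:
  assumes sq: "comm_square FV i j k l" and inj_i: "inj_components i" and inj_l: "inj_components l"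
  shows "is_pullback FV i j k l \<longleftrightarrow> preimage_in_image i k l"
proof
  assume pb: "is_pullback FV i j k l"
  have k: "is_vnat G M k" and l: "is_vnat G M l" and tgt: "ntgt k = ntgt l"
    using sq unfolding comm_square_FV_iff by auto
  show "preimage_in_image i k l"
    by (rule preimage_in_image_if_pullback[OF pb comm_square_pullback[OF k l tgt inj_l]
          preimage_in_image_pullback[OF k l tgt inj_l]])
qed (rule is_pullback_if_preimage_in_image[OF sq inj_i inj_l])

lemma is_pushout_iff_preimage_in_image:
  assumes sq: "comm_square FV i j k l" and inj_i: "inj_components i" and surj_j: "surj_components j"
    and surj_k: "surj_components k" and inj_l: "inj_components l"
  shows "is_pushout FV i j k l \<longleftrightarrow> preimage_in_image i k l"
proof
  assume po: "is_pushout FV i j k l"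
  have i: "is_vnat G M i" and j: "is_vnat G M j" and src: "nsrc i = nsrc j"
    using sq unfolding comm_square_FV_iff by auto
  show "preimage_in_image i k l"
    by (rule preimage_in_image_if_pushout[OF po comm_square_pushout[OF i j src inj_i surj_j]
          preimage_in_image_pushout[OF i j src inj_i surj_j]])
qed (rule is_pushout_if_preimage_in_image[OF sq surj_j inj_l surj_k])

definition zero_functor :: "('o,'a,'g) vfun" where
  "zero_functor = (\<lambda>x\<in>Ob. \<lparr>vcar = {0}, vpt = 0, vact = \<lambda>g\<in>carrier G. \<lambda>v\<in>{0}. 0\<rparr>, \<lambda>m\<in>Mo. \<lambda>v\<in>{0}. 0)"

lemma is_vfunctor_zero_functor: "is_vfunctor G M zero_functor"
proof (rule is_vfunctorI)
  have obj: "vect_obj G (fobj zero_functor x)" if "x \<in> Ob" for x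
    unfolding vect_obj_def using that by (auto simp: zero_functor_def)
  show "vect_obj G (fobj zero_functor x)" if "x \<in> Ob" for x using obj that .
  show "vect_mor G (fobj zero_functor (mdom m)) (fobj zero_functor (mcod m)) (fmor zero_functor m)"
    if "m \<in> Mo" for m
    by (rule vect_morI[OF obj]) (use that M.dom_cod_in_obj[OF that] in \<open>auto simp: zero_functor_def\<close>)
qed (use M.id_in_mor M.comp_in_mor M.dom_cod_in_obj in \<open>auto simp: zero_functor_def\<close>)

lemma zero_obj_zero_functor: "zero_obj FV zero_functor"
  unfolding zero_obj_def
proof (intro conjI ballI)
  show "zero_functor \<in> cObj FV" using is_vfunctor_zero_functor by simp
  fix X assume "X \<in> cObj FV"
  hence X: "is_vfunctor G M X" by simp
  show "\<exists>!f. f \<in> hom FV X zero_functor"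
  proof (rule ex1I[of _ "zero_map X zero_functor"])
    show "zero_map X zero_functor \<in> hom FV X zero_functor"
      using vnat_zero_map[OF X is_vfunctor_zero_functor] by (simp add: hom_def)
    fix f assume "f \<in> hom FV X zero_functor"
    hence f: "is_vnat G M f" "nsrc f = X" "ntgt f = zero_functor" by (auto simp: hom_def)
    show "f = zero_map X zero_functor"
      by (rule vnat_eqI[OF f(1) vnat_zero_map[OF X is_vfunctor_zero_functor]])
        (use f vnat_in[OF f(1)] in \<open>auto simp: zero_functor_def\<close>)
  qed
  show "\<exists>!f. f \<in> hom FV zero_functor X"
  proof (rule ex1I[of _ "zero_map zero_functor X"])
    show "zero_map zero_functor X \<in> hom FV zero_functor X"
      using vnat_zero_map[OF is_vfunctor_zero_functor X] by (simp add: hom_def)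
    fix f assume "f \<in> hom FV zero_functor X"
    hence f: "is_vnat G M f" "nsrc f = zero_functor" "ntgt f = X" by (auto simp: hom_def)
    show "f = zero_map zero_functor X"
      by (rule vnat_eqI[OF f(1) vnat_zero_map[OF is_vfunctor_zero_functor X]])
        (use f vnat_pt[OF f(1)] in \<open>auto simp: zero_functor_def\<close>)
  qed
qed

lemma bicartesian_if_preimage_in_image:
  assumes "comm_square FV i j k l" "inj_components i" "surj_components j" "surj_components k"
    "inj_components l" "preimage_in_image i k l"
  shows "bicartesian FV i j k l"
  unfolding bicartesian_def
  using is_pullback_iff_preimage_in_image is_pushout_iff_preimage_in_image assms by blast

theorem proto_abelian_FV: "proto_abelian FV"
  unfolding proto_abelian_def proto_exact_def
proof (intro conjI allI impI)
  show "is_category FV" by (rule is_category_FV)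
  show "\<exists>Z. zero_obj FV Z" using zero_obj_zero_functor by blast
  show "mono FV f" if "zero_obj FV Z \<and> X \<in> cObj FV \<and> f \<in> hom FV Z X" for Z X f
    using FV.zero_obj_hom_mono that by blast
  show "epi FV f" if "zero_obj FV Z \<and> X \<in> cObj FV \<and> f \<in> hom FV X Z" for Z X f
    using FV.zero_obj_hom_epi that by blast
  show "mono FV f" "epi FV f" if "iso FV f" for f using FV.iso_mono FV.iso_epi that by blast+
  show "mono FV (cComp FV g f)" if "mono FV f \<and> mono FV g \<and> cCod FV f = cDom FV g" for f g
    using FV.mono_cComp that by blast
  show "epi FV (cComp FV g f)" if "epi FV f \<and> epi FV g \<and> cCod FV f = cDom FV g" for f g
    using FV.epi_cComp that by blast
next
  fix i j k l assume "comm_square FV i j k l \<and> mono FV i \<and> mono FV l \<and> epi FV j \<and> epi FV k"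
  thus "is_pullback FV i j k l \<longleftrightarrow> is_pushout FV i j k l"
    using is_pullback_iff_preimage_in_image is_pushout_iff_preimage_in_image mono_FV_iff epi_FV_iff
    by blast
next
  fix k l assume "mono FV l \<and> epi FV k \<and> cCod FV k = cCod FV l"
  hence k: "is_vnat G M k" "surj_components k" and l: "is_vnat G M l" "inj_components l"
    and tgt: "ntgt k = ntgt l" using mono_FV_iff epi_FV_iff by auto
  note pb = vnat_pullback_incl[OF k(1) l(1) tgt l(2)] inj_components_pullback_incl[OF k(1) l(1) tgt l(2)]
    vnat_pullback_proj[OF k(1) l(1) tgt l(2)] surj_components_pullback_proj[OF k(1) l(1) tgt l(2) k(2)]
  have "bicartesian FV (pullback_incl k l) (pullback_proj k l) k l"
    by (rule bicartesian_if_preimage_in_image[OF comm_square_pullback[OF k(1) l(1) tgt l(2)] pb(2,4) k(2) l(2)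
          preimage_in_image_pullback[OF k(1) l(1) tgt l(2)]])
  thus "\<exists>i j. mono FV i \<and> epi FV j \<and> bicartesian FV i j k l"
    using pb mono_FV_iff epi_FV_iff by blast
next
  fix i j assume "mono FV i \<and> epi FV j \<and> cDom FV i = cDom FV j"
  hence i: "is_vnat G M i" "inj_components i" and j: "is_vnat G M j" "surj_components j"
    and src: "nsrc i = nsrc j" using mono_FV_iff epi_FV_iff by auto
  note po = vnat_pushout_quot[OF i(1) j(1) src i(2) j(2)] surj_components_pushout_quot[OF i(1) j(1) src i(2) j(2)]
    vnat_pushout_map[OF i(1) j(1) src i(2) j(2)] inj_components_pushout_map[OF i(1) j(1) src i(2) j(2)]
  have "bicartesian FV i j (pushout_quot i j) (pushout_map i j)"
    by (rule bicartesian_if_preimage_in_image[OF comm_square_pushout[OF i(1) j(1) src i(2) j(2)] i(2) j(2)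
          po(2,4) preimage_in_image_pushout[OF i(1) j(1) src i(2) j(2)]])
  thus "\<exists>k l. epi FV k \<and> mono FV l \<and> bicartesian FV i j k l"
    using po mono_FV_iff epi_FV_iff by blast
qed

section \<open>Finiteness\<close>

lemma finite_hom_FV:
  assumes fin: "finite Ob" and X: "is_vfunctor G M X" and Y: "is_vfunctor G M Y"
  shows "finite (hom FV X Y)"
proof -
  have "hom FV X Y \<subseteq> (\<lambda>\<eta>. (X, Y, \<eta>)) ` (PiE Ob (\<lambda>x. car X x \<rightarrow>\<^sub>E car Y x))"
  proof
    fix f assume "f \<in> hom FV X Y"
    hence f: "is_vnat G M f" "nsrc f = X" "ntgt f = Y" by (auto simp: hom_def)
    have "ncomp f \<in> PiE Ob (\<lambda>x. car X x \<rightarrow>\<^sub>E car Y x)"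
      unfolding PiE_iff using vnat_ext[OF f(1)] vnat_in[OF f(1)] vnat_component_ext[OF f(1)] f(2,3) by auto
    moreover have "f = (X, Y, ncomp f)" using f(2,3) by (cases f) auto
    ultimately show "f \<in> (\<lambda>\<eta>. (X, Y, \<eta>)) ` (PiE Ob (\<lambda>x. car X x \<rightarrow>\<^sub>E car Y x))" by blast
  qed
  moreover have "finite (PiE Ob (\<lambda>x. car X x \<rightarrow>\<^sub>E car Y x))"
    using fin vect_obj_finite[OF vfunctor_obj[OF X]] vect_obj_finite[OF vfunctor_obj[OF Y]]
    by (intro finite_PiE) auto
  ultimately show ?thesis using finite_subset by blast
qed

definition functors_below :: "nat \<Rightarrow> ('o,'a,'g) vfun set" where
  "functors_below N = {F. is_vfunctor G M F \<and> (\<forall>x\<in>Ob. car F x \<subseteq> {..<N})}"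

lemma finite_functors_below:
  assumes "finite Ob" "finite Mo" "finite (carrier G)"
  shows "finite (functors_below N)"
proof -
  define maps where "maps = (\<Union>S\<in>Pow {..<N}. S \<rightarrow>\<^sub>E {..<N})"
  define objs where "objs = (\<lambda>(c, p, a). \<lparr>vcar = c, vpt = p, vact = a\<rparr>) `
    (Pow {..<N} \<times> {..<N} \<times> (carrier G \<rightarrow>\<^sub>E maps))"
  have fin_maps: "finite maps" unfolding maps_def by (intro finite_UN_I finite_PiE) (auto intro: finite_subset)
  have fin_objs: "finite objs"
    unfolding objs_def using fin_maps assms(3) by (intro finite_imageI finite_cartesian_product finite_PiE) auto
  have "functors_below N \<subseteq> (Ob \<rightarrow>\<^sub>E objs) \<times> (Mo \<rightarrow>\<^sub>E maps)"
  proof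
    fix F assume "F \<in> functors_below N"
    hence F: "is_vfunctor G M F" and below: "\<And>x. x \<in> Ob \<Longrightarrow> car F x \<subseteq> {..<N}"
      by (auto simp: functors_below_def)
    have "fobj F x \<in> objs" if x: "x \<in> Ob" for x
    proof -
      have V: "vect_obj G (fobj F x)" using vfunctor_obj[OF F x] .
      have "vact (fobj F x) g \<in> maps" if g: "g \<in> carrier G" for g
      proof -
        have "vact (fobj F x) g \<in> car F x \<rightarrow>\<^sub>E {..<N}"
          using V g below[OF x] vect_obj_act_closed[OF V g] unfolding vect_obj_def by (auto simp: PiE_iff)
        thus ?thesis unfolding maps_def using below[OF x] by blast
      qed
      hence "vact (fobj F x) \<in> carrier G \<rightarrow>\<^sub>E maps" using V unfolding vect_obj_def by (auto simp: PiE_iff)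
      moreover have "pt F x \<in> {..<N}" using vect_obj_pt_in[OF V] below[OF x] by blast
      ultimately show ?thesis
        unfolding objs_def using below[OF x] by (intro image_eqI[of _ _ "(car F x, pt F x, vact (fobj F x))"]) auto
    qed
    moreover have "fmor F m \<in> maps" if m: "m \<in> Mo" for m
    proof -
      have "fmor F m \<in> car F (mdom m) \<rightarrow>\<^sub>E {..<N}"
        using vect_mor_ext[OF vfunctor_mor[OF F m]] vfunctor_in[OF F m] below M.dom_cod_in_obj[OF m]
        by (auto simp: PiE_iff)
      thus ?thesis unfolding maps_def using below M.dom_cod_in_obj[OF m] by blast
    qed
    ultimately show "F \<in> (Ob \<rightarrow>\<^sub>E objs) \<times> (Mo \<rightarrow>\<^sub>E maps)"
      using vfunctor_obj_ext[OF F] vfunctor_mor_ext[OF F] by (auto simp: PiE_iff mem_Times_iff)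
  qed
  moreover have "finite ((Ob \<rightarrow>\<^sub>E objs) \<times> (Mo \<rightarrow>\<^sub>E maps))"
    using assms(1,2) fin_objs fin_maps by (intro finite_cartesian_product finite_PiE) auto
  ultimately show ?thesis using finite_subset by blast
qed

lemma iso_FV_if_bijective_components:
  assumes t: "is_vnat G M t" and inj: "inj_components t" and surj: "surj_components t"
  shows "iso FV t"
proof -
  have id: "is_vnat G M (cId FV (ntgt t))" using vnat_cId[OF vnat_tgt[OF t]] .
  have img: "\<forall>x\<in>Ob. ncomp (cId FV (ntgt t)) x ` car (nsrc (cId FV (ntgt t))) x \<subseteq> ncomp t x ` car (nsrc t) x"
    using surj unfolding surj_components_def by simp
  have tgt: "ntgt (cId FV (ntgt t)) = ntgt t" by simp
  note inverse = vnat_lift_along[OF t id tgt inj img] cComp_lift_along[OF t id tgt inj img]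
    lift_along_unique[OF t id tgt inj img]
  define u where "u = lift_along t (cId FV (ntgt t))"
  have u: "is_vnat G M u" "nsrc u = ntgt t" "ntgt u = nsrc t" "cComp FV t u = cId FV (ntgt t)"
    using inverse by (simp_all add: u_def)
  have "cComp FV u t = cId FV (nsrc t)"
  proof (rule vnat_eqI)
    fix x v assume x: "x \<in> Ob" and "v \<in> car (nsrc (cComp FV u t)) x"
    hence v: "v \<in> car (nsrc t) x" by simp
    have "ncomp t x v \<in> car (nsrc (cId FV (ntgt t))) x" using vnat_in[OF t x v] by simp
    thus "ncomp (cComp FV u t) x v = ncomp (cId FV (nsrc t)) x v"
      using inverse(3)[OF x _ v] x v by (simp add: u_def)
  qed (use vnat_cComp[OF u(1) t] u vnat_cId[OF vnat_src[OF t]] in simp_all)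
  moreover have "u \<in> hom FV (cCod FV t) (cDom FV t)" using u by (simp add: hom_def)
  ultimately show ?thesis unfolding iso_def using t u by (intro conjI bexI[of _ u]) simp_all
qed

definition transport :: "('o,'a,'g) vfun \<Rightarrow> ('o \<Rightarrow> nat \<Rightarrow> nat) \<Rightarrow> ('o,'a,'g) vfun" where
  "transport F \<sigma> =
     (\<lambda>x\<in>Ob. \<lparr>vcar = \<sigma> x ` car F x, vpt = \<sigma> x (pt F x),
        vact = \<lambda>g\<in>carrier G. \<lambda>w\<in>\<sigma> x ` car F x. \<sigma> x (act F x g (inv_into (car F x) (\<sigma> x) w))\<rparr>,
      \<lambda>m\<in>Mo. \<lambda>w\<in>\<sigma> (mdom m) ` car F (mdom m).
        \<sigma> (mcod m) (fmor F m (inv_into (car F (mdom m)) (\<sigma> (mdom m)) w)))"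

definition transport_map :: "('o,'a,'g) vfun \<Rightarrow> ('o \<Rightarrow> nat \<Rightarrow> nat) \<Rightarrow> ('o,'a,'g) vnat" where
  "transport_map F \<sigma> = (F, transport F \<sigma>, \<lambda>x\<in>Ob. \<lambda>v\<in>car F x. \<sigma> x v)"

context
  fixes F :: "('o,'a,'g) vfun" and \<sigma> :: "'o \<Rightarrow> nat \<Rightarrow> nat"
  assumes F: "is_vfunctor G M F" and inj: "\<forall>x\<in>Ob. inj_on (\<sigma> x) (car F x)"
begin

lemma transport_simps:
  "x \<in> Ob \<Longrightarrow> car (transport F \<sigma>) x = \<sigma> x ` car F x"
  "x \<in> Ob \<Longrightarrow> pt (transport F \<sigma>) x = \<sigma> x (pt F x)"
  "x \<in> Ob \<Longrightarrow> g \<in> carrier G \<Longrightarrow> v \<in> car F x \<Longrightarrow> act (transport F \<sigma>) x g (\<sigma> x v) = \<sigma> x (act F x g v)"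
  "m \<in> Mo \<Longrightarrow> v \<in> car F (mdom m) \<Longrightarrow> fmor (transport F \<sigma>) m (\<sigma> (mdom m) v) = \<sigma> (mcod m) (fmor F m v)"
  using inj inv_into_f_f M.dom_cod_in_obj by (fastforce simp: transport_def)+

lemma transport_inj: "x \<in> Ob \<Longrightarrow> a \<in> car F x \<Longrightarrow> b \<in> car F x \<Longrightarrow> \<sigma> x a = \<sigma> x b \<Longrightarrow> a = b"
  using inj inj_onD by metis

lemma vect_obj_transport:
  assumes x: "x \<in> Ob" shows "vect_obj G (fobj (transport F \<sigma>) x)"
proof -
  have V: "vect_obj G (fobj F x)" using vfunctor_obj[OF F x] .
  have act: "\<And>g v. g \<in> carrier G \<Longrightarrow> v \<in> car F x \<Longrightarrow> act (transport F \<sigma>) x g (\<sigma> x v) = \<sigma> x (act F x g v)"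
    using transport_simps(3) x by blast
  show ?thesis
    unfolding vect_obj_def
  proof (intro conjI ballI impI)
    show "finite (car (transport F \<sigma>) x)" using transport_simps(1)[OF x] vect_obj_finite[OF V] by simp
    show "pt (transport F \<sigma>) x \<in> car (transport F \<sigma>) x" using transport_simps(1,2)[OF x] vect_obj_pt_in[OF V] by simp
    show "vact (fobj (transport F \<sigma>) x) \<in> extensional (carrier G)" using x by (simp add: transport_def)
  next
    fix g assume g: "g \<in> carrier G"
    show "act (transport F \<sigma>) x g \<in> car (transport F \<sigma>) x \<rightarrow> car (transport F \<sigma>) x"
      using transport_simps(1)[OF x] act[OF g] vect_obj_act_closed[OF V g] by auto
    show "act (transport F \<sigma>) x g \<in> extensional (car (transport F \<sigma>) x)" using x g by (simp add: transport_def)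
    show "act (transport F \<sigma>) x g (pt (transport F \<sigma>) x) = pt (transport F \<sigma>) x"
      using transport_simps(2)[OF x] act[OF g vect_obj_pt_in[OF V]] vect_obj_act_pt[OF V g] by simp
  next
    fix w assume "w \<in> car (transport F \<sigma>) x"
    then obtain v where "v \<in> car F x" "w = \<sigma> x v" using transport_simps(1)[OF x] by auto
    thus "act (transport F \<sigma>) x \<one>\<^bsub>G\<^esub> w = w" using act[OF one_closed] vect_obj_act_one[OF V] by simp
  next
    fix g h w assume gh: "g \<in> carrier G" "h \<in> carrier G" and "w \<in> car (transport F \<sigma>) x"
    then obtain v where v: "v \<in> car F x" "w = \<sigma> x v" using transport_simps(1)[OF x] by auto
    thus "act (transport F \<sigma>) x (g \<otimes>\<^bsub>G\<^esub> h) w = act (transport F \<sigma>) x g (act (transport F \<sigma>) x h w)"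
      using act[OF m_closed[OF gh] v(1)] act[OF gh(2) v(1)] act[OF gh(1) vect_obj_act_closed[OF V gh(2) v(1)]]
        vect_obj_act_mult[OF V gh v(1)] by simp
  next
    fix g w assume g: "g \<in> carrier G" and w: "w \<in> car (transport F \<sigma>) x - {pt (transport F \<sigma>) x}"
      and fix_w: "act (transport F \<sigma>) x g w = w"
    then obtain v where v: "v \<in> car F x" "w = \<sigma> x v" using transport_simps(1)[OF x] by auto
    have "act F x g v = v"
      using fix_w act[OF g v(1)] v transport_inj[OF x vect_obj_act_closed[OF V g v(1)] v(1)] by simp
    moreover have "v \<noteq> pt F x" using w v transport_simps(2)[OF x] by auto
    ultimately show "g = \<one>\<^bsub>G\<^esub>" using vect_obj_free[OF V g v(1)] by simp
  qed
qed

lemma vect_mor_transport: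
  assumes m: "m \<in> Mo"
  shows "vect_mor G (fobj (transport F \<sigma>) (mdom m)) (fobj (transport F \<sigma>) (mcod m)) (fmor (transport F \<sigma>) m)"
proof -
  have dc: "mdom m \<in> Ob" "mcod m \<in> Ob" using M.dom_cod_in_obj[OF m] by auto
  note simps = transport_simps(1)[OF dc(1)] transport_simps(1)[OF dc(2)] transport_simps(2)[OF dc(1)]
    transport_simps(2)[OF dc(2)] transport_simps(3)[OF dc(1)] transport_simps(3)[OF dc(2)] transport_simps(4)[OF m]
  show ?thesis
  proof (rule vect_morI[OF vect_obj_transport[OF dc(1)]])
    show "fmor (transport F \<sigma>) m \<in> extensional (car (transport F \<sigma>) (mdom m))"
      using m dc by (simp add: transport_def)
    show "fmor (transport F \<sigma>) m (pt (transport F \<sigma>) (mdom m)) = pt (transport F \<sigma>) (mcod m)"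
      using simps vfunctor_pt_in[OF F dc(1)] vfunctor_pt[OF F m] by simp
  next
    fix w assume "w \<in> car (transport F \<sigma>) (mdom m)"
    thus "fmor (transport F \<sigma>) m w \<in> car (transport F \<sigma>) (mcod m)" using simps vfunctor_in[OF F m] by auto
  next
    fix g w assume g: "g \<in> carrier G" and "w \<in> car (transport F \<sigma>) (mdom m)"
    then obtain v where v: "v \<in> car F (mdom m)" "w = \<sigma> (mdom m) v" using simps by auto
    show "fmor (transport F \<sigma>) m (act (transport F \<sigma>) (mdom m) g w) = act (transport F \<sigma>) (mcod m) g (fmor (transport F \<sigma>) m w)"
      using v g simps vfunctor_act_closed[OF F dc(1) g v(1)] vfunctor_in[OF F m v(1)] vfunctor_act[OF F m g v(1)] by simp
  next
    fix w1 w2 assume "w1 \<in> car (transport F \<sigma>) (mdom m)" "w2 \<in> car (transport F \<sigma>) (mdom m)"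
      and eq: "fmor (transport F \<sigma>) m w1 = fmor (transport F \<sigma>) m w2"
      and ne: "fmor (transport F \<sigma>) m w1 \<noteq> pt (transport F \<sigma>) (mcod m)"
    then obtain v1 v2 where v: "v1 \<in> car F (mdom m)" "w1 = \<sigma> (mdom m) v1" "v2 \<in> car F (mdom m)" "w2 = \<sigma> (mdom m) v2"
      using simps by auto
    have "fmor F m v1 = fmor F m v2"
      using eq v simps transport_inj[OF dc(2) vfunctor_in[OF F m v(1)] vfunctor_in[OF F m v(3)]] by simp
    moreover have "fmor F m v1 \<noteq> pt F (mcod m)" using ne v simps by auto
    ultimately show "w1 = w2" using vfunctor_inj[OF F m v(1) v(3)] v by simp
  qed
qed

lemma is_vfunctor_transport: "is_vfunctor G M (transport F \<sigma>)"
proof (rule is_vfunctorI)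
  show "vect_mor G (fobj (transport F \<sigma>) (mdom m)) (fobj (transport F \<sigma>) (mcod m)) (fmor (transport F \<sigma>) m)"
    if "m \<in> Mo" for m using vect_mor_transport[OF that] .
next
  fix x assume x: "x \<in> Ob"
  show "vect_obj G (fobj (transport F \<sigma>) x)" by (rule vect_obj_transport[OF x])
  show "fmor (transport F \<sigma>) (cId M x) = (\<lambda>w\<in>car (transport F \<sigma>) x. w)"
  proof (rule extensionalityI[of _ "car (transport F \<sigma>) x"])
    show "fmor (transport F \<sigma>) (cId M x) \<in> extensional (car (transport F \<sigma>) x)"
      using M.id_in_mor[OF x] x by (simp add: transport_def)
    fix w assume "w \<in> car (transport F \<sigma>) x"
    then obtain v where "v \<in> car F x" "w = \<sigma> x v" using transport_simps(1)[OF x] by auto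
    thus "fmor (transport F \<sigma>) (cId M x) w = (\<lambda>w\<in>car (transport F \<sigma>) x. w) w"
      using transport_simps(4)[of "cId M x" v] M.id_in_mor[OF x] vfunctor_id[OF F x] transport_simps(1)[OF x] by simp
  qed simp
next
  fix f g w assume a: "f \<in> Mo" "g \<in> Mo" "mcod f = mdom g" "w \<in> car (transport F \<sigma>) (mdom f)"
  obtain v where v: "v \<in> car F (mdom f)" "w = \<sigma> (mdom f) v"
    using a(4) transport_simps(1) M.dom_cod_in_obj[OF a(1)] by auto
  have c: "cComp M g f \<in> Mo" "mdom (cComp M g f) = mdom f" "mcod (cComp M g f) = mcod g"
    using M.comp_in_mor[OF a(1-3)] by auto
  have fv: "fmor F f v \<in> car F (mdom g)" using vfunctor_in[OF F a(1) v(1)] a(3) by simp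
  show "fmor (transport F \<sigma>) (cComp M g f) w = fmor (transport F \<sigma>) g (fmor (transport F \<sigma>) f w)"
    using transport_simps(4)[OF c(1)] transport_simps(4)[OF a(1) v(1)] transport_simps(4)[OF a(2) fv] c v a(3)
      vfunctor_comp[OF F a(1-3) v(1)] by simp
qed (auto simp: transport_def)

lemma transport_map_props:
  shows vnat_transport_map: "is_vnat G M (transport_map F \<sigma>)"
    and inj_components_transport_map: "inj_components (transport_map F \<sigma>)"
    and surj_components_transport_map: "surj_components (transport_map F \<sigma>)"
    and nsrc_transport_map: "nsrc (transport_map F \<sigma>) = F"
    and ntgt_transport_map: "ntgt (transport_map F \<sigma>) = transport F \<sigma>"
proof -
  have ncomp: "\<And>x v. x \<in> Ob \<Longrightarrow> v \<in> car F x \<Longrightarrow> ncomp (transport_map F \<sigma>) x v = \<sigma> x v"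
    by (simp add: transport_map_def)
  show "nsrc (transport_map F \<sigma>) = F" "ntgt (transport_map F \<sigma>) = transport F \<sigma>"
    by (simp_all add: transport_map_def)
  show "is_vnat G M (transport_map F \<sigma>)"
  proof (rule is_vnatI)
    fix x assume x: "x \<in> Ob"
    show "vect_mor G (fobj (nsrc (transport_map F \<sigma>)) x) (fobj (ntgt (transport_map F \<sigma>)) x)
        (ncomp (transport_map F \<sigma>) x)"
      by (rule vect_morI)
        (use x ncomp transport_simps(1-3)[OF x] vfunctor_obj[OF F x] vfunctor_pt_in[OF F x]
          vfunctor_act_closed[OF F x] transport_inj[OF x] in \<open>auto simp: transport_map_def\<close>)
  next
    fix m v assume m: "m \<in> Mo" and "v \<in> car (nsrc (transport_map F \<sigma>)) (mdom m)"
    hence v: "v \<in> car F (mdom m)" by (simp add: transport_map_def)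
    show "ncomp (transport_map F \<sigma>) (mcod m) (fmor (nsrc (transport_map F \<sigma>)) m v)
        = fmor (ntgt (transport_map F \<sigma>)) m (ncomp (transport_map F \<sigma>) (mdom m) v)"
      using ncomp M.dom_cod_in_obj[OF m] vfunctor_in[OF F m v] transport_simps(4)[OF m v] v
      by (simp add: transport_map_def)
  qed (use F is_vfunctor_transport in \<open>simp_all add: transport_map_def\<close>)
  show "inj_components (transport_map F \<sigma>)"
    unfolding inj_components_def using inj by (auto simp: transport_map_def inj_on_def)
  show "surj_components (transport_map F \<sigma>)"
    unfolding surj_components_def using transport_simps(1) by (auto simp: transport_map_def)
qed

end

lemma ex_iso_initial_segments:
  assumes B: "is_vfunctor G M B"
  obtains \<phi> where "iso FV \<phi>" "nsrc \<phi> = B" "\<forall>x\<in>Ob. car (ntgt \<phi>) x = {..<card (car B x)}"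
proof -
  define \<sigma> where "\<sigma> = (\<lambda>x. SOME h. bij_betw h (car B x) {..<card (car B x)})"
  have bij: "bij_betw (\<sigma> x) (car B x) {..<card (car B x)}" if "x \<in> Ob" for x
    using ex_bij_betw_finite_nat[OF vect_obj_finite[OF vfunctor_obj[OF B that]]]
    unfolding \<sigma>_def atLeast0LessThan by (rule someI_ex)
  hence inj: "\<forall>x\<in>Ob. inj_on (\<sigma> x) (car B x)" by (simp add: bij_betw_def)
  have "iso FV (transport_map B \<sigma>)"
    by (rule iso_FV_if_bijective_components[OF vnat_transport_map inj_components_transport_map
          surj_components_transport_map]) (use B inj in simp_all)
  moreover have "\<forall>x\<in>Ob. car (ntgt (transport_map B \<sigma>)) x = {..<card (car B x)}"
    using ntgt_transport_map[OF B inj] transport_simps(1)[OF B inj] bij by (simp add: bij_betw_def)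
  ultimately show ?thesis using that nsrc_transport_map[OF B inj] by blast
qed

lemma ses_FV_memD:
  assumes s: "(i, p) \<in> ses FV (mono FV) (epi FV) A C"
  shows "is_vnat G M i" "inj_components i" "is_vnat G M p" "surj_components p"
    "nsrc i = A" "ntgt p = C" "ntgt i = nsrc p"
    and ses_FV_kernel: "\<And>x b. x \<in> Ob \<Longrightarrow> b \<in> car (ntgt i) x \<Longrightarrow> ncomp p x b = pt C x \<Longrightarrow>
      b \<in> ncomp i x ` car A x"
proof -
  obtain Z z1 z2 where Z: "zero_obj FV Z" and z2: "z2 \<in> hom FV Z C" and bc: "bicartesian FV i z1 p z2"
    and ip: "mono FV i" "epi FV p" "nsrc i = A" "ntgt p = C"
    using s unfolding ses_def by auto
  show i: "is_vnat G M i" "inj_components i" and p: "is_vnat G M p" "surj_components p"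
    using ip(1,2) mono_FV_iff epi_FV_iff by auto
  show "nsrc i = A" "ntgt p = C" using ip(3,4) .
  have sq: "comm_square FV i z1 p z2" using bc unfolding bicartesian_def is_pullback_def by blast
  thus "ntgt i = nsrc p" unfolding comm_square_FV_iff by blast
  have z: "is_vnat G M z2" "inj_components z2" "nsrc z2 = Z" "ntgt z2 = C"
    using FV.zero_obj_hom_mono[OF Z z2] z2 mono_FV_iff by (auto simp: hom_def)
  have Q: "preimage_in_image i p z2"
    using is_pullback_iff_preimage_in_image[OF sq i(2) z(2)] bc unfolding bicartesian_def by blast
  fix x b assume x: "x \<in> Ob" and b: "b \<in> car (ntgt i) x" and pb: "ncomp p x b = pt C x"
  have "pt Z x \<in> car (nsrc z2) x" "ncomp z2 x (pt Z x) = pt C x"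
    using vfunctor_pt_in[OF vnat_src[OF z(1)] x] vnat_pt[OF z(1) x] z(3,4) by simp_all
  thus "b \<in> ncomp i x ` car A x"
    using preimage_in_imageD[OF Q x, of b "pt Z x"] b pb sq ip(3) unfolding comm_square_FV_iff by force
qed

lemma ses_FV_card_middle:
  assumes s: "(i, p) \<in> ses FV (mono FV) (epi FV) A C" and x: "x \<in> Ob"
  shows "card (car (ntgt i) x) \<le> card (car A x) + card (car C x)"
proof -
  note s' = ses_FV_memD[OF s]
  define R where "R = {b \<in> car (ntgt i) x. ncomp p x b \<noteq> pt C x}"
  have A: "finite (car A x)" and B: "finite (car (ntgt i) x)" and C: "finite (car C x)"
    using vect_obj_finite[OF vfunctor_obj[OF vnat_src[OF s'(1)] x]]
      vect_obj_finite[OF vfunctor_obj[OF vnat_tgt[OF s'(1)] x]]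
      vect_obj_finite[OF vfunctor_obj[OF vnat_tgt[OF s'(3)] x]] s'(5,6) by simp_all
  have inj: "inj_on (ncomp p x) R"
    using vnat_inj[OF s'(3) x] s'(6,7) by (auto simp: R_def inj_on_def)
  have im: "ncomp p x ` R \<subseteq> car C x" using vnat_in[OF s'(3) x] s'(6,7) by (auto simp: R_def)
  have "card (car (ntgt i) x) \<le> card (ncomp i x ` car A x \<union> R)"
    using ses_FV_kernel[OF s x] A B by (intro card_mono) (auto simp: R_def)
  also have "\<dots> \<le> card (ncomp i x ` car A x) + card R" by (rule card_Un_le)
  also have "\<dots> \<le> card (car A x) + card (car C x)"
    by (rule add_mono[OF card_image_le[OF A] card_inj_on_le[OF inj im C]])
  finally show ?thesis .
qed

lemma ses_FV_bounded_representative: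
  assumes s: "(i, p) \<in> ses FV (mono FV) (epi FV) A C" and fin: "finite Ob"
  obtains B i1 p1 where "B \<in> functors_below (\<Sum>x\<in>Ob. card (car A x) + card (car C x))"
    "i1 \<in> hom FV A B" "p1 \<in> hom FV B C" "ses_equiv FV (i, p) (i1, p1)" "ses_equiv FV (i1, p1) (i, p)"
proof -
  note s' = ses_FV_memD[OF s]
  obtain \<phi> where \<phi>: "iso FV \<phi>" "nsrc \<phi> = ntgt i" "\<forall>x\<in>Ob. car (ntgt \<phi>) x = {..<card (car (ntgt i) x)}"
    using ex_iso_initial_segments[OF vnat_tgt[OF s'(1)]] by blast
  obtain \<psi> where \<psi>: "iso FV \<psi>" "\<psi> \<in> hom FV (cCod FV \<phi>) (cDom FV \<phi>)"
    "cComp FV \<psi> \<phi> = cId FV (cDom FV \<phi>)" "cComp FV \<phi> \<psi> = cId FV (cCod FV \<phi>)"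
    by (rule FV.iso_inverse[OF \<phi>(1)])
  have \<phi>v: "is_vnat G M \<phi>" using \<phi>(1) by (simp add: iso_def)
  have \<psi>v: "is_vnat G M \<psi>" "nsrc \<psi> = ntgt \<phi>" "ntgt \<psi> = ntgt i" using \<psi>(2) \<phi>(2) by (auto simp: hom_def)
  have i1: "cComp FV \<phi> i \<in> hom FV A (ntgt \<phi>)"
    using vnat_cComp[OF \<phi>v s'(1)] \<phi>(2) s'(5) by (simp add: hom_def)
  have p1: "cComp FV p \<psi> \<in> hom FV (ntgt \<phi>) C"
    using vnat_cComp[OF s'(3) \<psi>v(1)] \<psi>v s'(6,7) by (simp add: hom_def)
  have "card (car (ntgt i) x) \<le> (\<Sum>x\<in>Ob. card (car A x) + card (car C x))" if "x \<in> Ob" for x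
    using ses_FV_card_middle[OF s that] member_le_sum[OF that, of "\<lambda>x. card (car A x) + card (car C x)"] fin
    by simp
  hence "ntgt \<phi> \<in> functors_below (\<Sum>x\<in>Ob. card (car A x) + card (car C x))"
    using vnat_tgt[OF \<phi>v] \<phi>(3) by (auto simp: functors_below_def)
  moreover have s_r: "ses_equiv FV (i, p) (cComp FV \<phi> i, cComp FV p \<psi>)"
    by (rule FV.ses_equiv_conj_iso) (use s' \<phi> \<psi> \<psi>v in simp_all)
  moreover have "ses_equiv FV (cComp FV \<phi> i, cComp FV p \<psi>) (i, p)"
    by (rule FV.ses_equiv_sym[OF s_r]) (use s' i1 p1 in \<open>simp_all add: hom_def\<close>)
  ultimately show ?thesis using that i1 p1 by blast
qed

lemma finite_Ext_FV:
  assumes fin: "finite Ob" "finite Mo" "finite (carrier G)"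
    and A: "is_vfunctor G M A" and C: "is_vfunctor G M C"
  shows "finite (Ext FV (mono FV) (epi FV) C A)"
proof -
  let ?S = "ses FV (mono FV) (epi FV) A C"
  define R where "R = (\<Union>B\<in>functors_below (\<Sum>x\<in>Ob. card (car A x) + card (car C x)). hom FV A B \<times> hom FV B C)"
  have "finite R"
    unfolding R_def using finite_functors_below[OF fin] finite_hom_FV[OF fin(1)] A C
    by (intro finite_UN_I finite_cartesian_product) (auto simp: functors_below_def)
  moreover have "Ext FV (mono FV) (epi FV) C A \<subseteq> (\<lambda>r. {s' \<in> ?S. ses_equiv FV r s'}) ` R"
  proof
    fix K assume "K \<in> Ext FV (mono FV) (epi FV) C A"
    then obtain i p where s: "(i, p) \<in> ?S" and K: "K = {s' \<in> ?S. ses_equiv FV (i, p) s'}"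
      unfolding Ext_def by auto
    obtain B i1 p1 where B: "B \<in> functors_below (\<Sum>x\<in>Ob. card (car A x) + card (car C x))"
      and i1: "i1 \<in> hom FV A B" and p1: "p1 \<in> hom FV B C"
      and s_r: "ses_equiv FV (i, p) (i1, p1)" and r_s: "ses_equiv FV (i1, p1) (i, p)"
      by (rule ses_FV_bounded_representative[OF s fin(1)])
    have "ses_equiv FV (i, p) (i', p') \<longleftrightarrow> ses_equiv FV (i1, p1) (i', p')" if "(i', p') \<in> ?S" for i' p'
    proof -
      have p': "p' \<in> cMor FV" "cDom FV p' = cCod FV i'" using ses_FV_memD[OF that] by simp_all
      show ?thesis
        using FV.ses_equiv_trans[OF s_r _ _ p'] FV.ses_equiv_trans[OF r_s _ _ p'] ses_FV_memD(1)[OF s] i1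
        by (auto simp: hom_def)
    qed
    hence "K = {s' \<in> ?S. ses_equiv FV (i1, p1) s'}" using K by auto
    moreover have "(i1, p1) \<in> R" unfolding R_def using B i1 p1 by blast
    ultimately show "K \<in> (\<lambda>r. {s' \<in> ?S. ses_equiv FV r s'}) ` R" by blast
  qed
  ultimately show ?thesis using finite_surj by blast
qed

lemma finitary_FV:
  assumes "finite Ob" "finite Mo" "finite (carrier G)"
  shows "finitary FV (mono FV) (epi FV)"
  unfolding finitary_def using finite_hom_FV finite_Ext_FV assms by simp

end

theorem mainTheorem4:
  fixes G :: "('g,'b) monoid_scheme" and M :: "('o,'a) catg"
  assumes "comm_group G" and "finite (carrier G)" and "is_category M"
  shows "proto_abelian (FunVect G M) \<and>
         (finite (cObj M) \<and> finite (cMor M) \<longrightarrow>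
            finitary (FunVect G M) (mono (FunVect G M)) (epi (FunVect G M)))"
proof -
  interpret fun_vect G M
    using assms(1,3) by (simp add: fun_vect_def category_def comm_group.axioms(2))
  show ?thesis using proto_abelian_FV finitary_FV assms(2) by blast
qed

end
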